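(* Let $\varphi(z)=az+b$, where $a,b\in\mathbb{C}$ and $|a|\le 1$, and let $C_\varphi f=f\circ\varphi$ be the composition operator on $\mathcal{F}^2$. Then each of the following holds: $C_\varphi$ is a bounded normaloid operator on $\mathcal{F}^2$ if and only if $b=0$; $C_\varphi$ is a bounded hyponormal operator on $\mathcal{F}^2$ if and only if $b=0$; $C_\varphi$ is a bounded cohyponormal operator on $\mathcal{F}^2$ if and only if $b=0$.
   Context: $\mathcal{F}^2$ is the Fock space: the Hilbert space of entire functions $f$ on $\mathbb{C}$ with $\int_{\mathbb{C}}|f(z)|^2\,d\mu(z)<\infty$, where $d\mu(z)=\pi^{-1}e^{-|z|^2}\,dA(z)$, with inner product $\langle f,g\rangle=\int f\overline{g}\,d\mu$. A bounded operator $T$ on a Hilbert space is normaloid if $\|T\|=r(T)$ (the spectral radius), hyponormal if $T^*T\ge TT^*$, and cohyponormal if $T^*T\le TT^*$. *)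

theory Defs
  imports "HOL-Analysis.Analysis"
begin

text \<open>Gaussian weight of the Fock measure: d mu(z) = pi^{-1} exp(-|z|^2) dA(z);
  dA is Lebesgue area measure, i.e. lborel on the complex plane.\<close>
definition fock_weight :: "complex \<Rightarrow> real" where
  "fock_weight z = exp (- (cmod z)\<^sup>2) / pi"

definition fock_space :: "(complex \<Rightarrow> complex) set" where
  "fock_space = {f. f holomorphic_on UNIV \<and>
      integrable lborel (\<lambda>z. (cmod (f z))\<^sup>2 * fock_weight z)}"

definition fock_inner :: "(complex \<Rightarrow> complex) \<Rightarrow> (complex \<Rightarrow> complex) \<Rightarrow> complex" where
  "fock_inner f g = integral\<^sup>L lborel (\<lambda>z. f z * cnj (g z) * complex_of_real (fock_weight z))"

definition fock_norm :: "(complex \<Rightarrow> complex) \<Rightarrow> real" where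
  "fock_norm f = sqrt (integral\<^sup>L lborel (\<lambda>z. (cmod (f z))\<^sup>2 * fock_weight z))"

type_synonym fock_op = "(complex \<Rightarrow> complex) \<Rightarrow> (complex \<Rightarrow> complex)"

text \<open>Bounded (linear) operator on F^2; only its action on F^2 matters.\<close>
definition fock_bounded :: "fock_op \<Rightarrow> bool" where
  "fock_bounded T \<longleftrightarrow>
     (\<forall>f\<in>fock_space. T f \<in> fock_space) \<and>
     (\<forall>f\<in>fock_space. \<forall>g\<in>fock_space. T (\<lambda>z. f z + g z) = (\<lambda>z. T f z + T g z)) \<and>
     (\<forall>f\<in>fock_space. \<forall>c. T (\<lambda>z. c * f z) = (\<lambda>z. c * T f z)) \<and>
     (\<exists>K. \<forall>f\<in>fock_space. fock_norm (T f) \<le> K * fock_norm f)"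

definition fock_opnorm :: "fock_op \<Rightarrow> real" where
  "fock_opnorm T = Sup {fock_norm (T f) | f. f \<in> fock_space \<and> fock_norm f \<le> 1}"

definition fock_invertible :: "fock_op \<Rightarrow> bool" where
  "fock_invertible A \<longleftrightarrow>
     (\<exists>S. fock_bounded S \<and> (\<forall>f\<in>fock_space. S (A f) = f \<and> A (S f) = f))"

definition fock_spectrum :: "fock_op \<Rightarrow> complex set" where
  "fock_spectrum T = {c. \<not> fock_invertible (\<lambda>f z. T f z - c * f z)}"

definition fock_spectral_radius :: "fock_op \<Rightarrow> real" where
  "fock_spectral_radius T = Sup (cmod ` fock_spectrum T)"

definition normaloid :: "fock_op \<Rightarrow> bool" where
  "normaloid T \<longleftrightarrow> fock_opnorm T = fock_spectral_radius T"

definition fock_adjoint :: "fock_op \<Rightarrow> fock_op \<Rightarrow> bool" where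
  "fock_adjoint T S \<longleftrightarrow> (\<forall>f\<in>fock_space. S f \<in> fock_space) \<and>
     (\<forall>f\<in>fock_space. \<forall>g\<in>fock_space. fock_inner (T f) g = fock_inner f (S g))"

definition fock_positive :: "fock_op \<Rightarrow> bool" where
  "fock_positive A \<longleftrightarrow> (\<forall>f\<in>fock_space. fock_inner (A f) f \<in> \<real> \<and> 0 \<le> Re (fock_inner (A f) f))"

definition hyponormal :: "fock_op \<Rightarrow> bool" where
  "hyponormal T \<longleftrightarrow> (\<exists>S. fock_adjoint T S \<and>
      fock_positive (\<lambda>f z. S (T f) z - T (S f) z))"

definition cohyponormal :: "fock_op \<Rightarrow> bool" where
  "cohyponormal T \<longleftrightarrow> (\<exists>S. fock_adjoint T S \<and>
      fock_positive (\<lambda>f z. T (S f) z - S (T f) z))"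

definition comp_op :: "(complex \<Rightarrow> complex) \<Rightarrow> fock_op" where
  "comp_op \<phi> f = (\<lambda>z. f (\<phi> z))"

end

(* Everything is tested on the reproducing kernels K_v(z) = exp (conj v * z) of F^2: for
   phi(z) = a z + b, the operator C_phi maps K_v to exp (conj v * b) K_(conj a * v), and its
   adjoint maps K_u to K_(phi u).

   If b = 0, C_phi is a contraction that fixes the constants and commutes with its adjoint
   C_(conj a z).  Contractivity comes from the adjoint identity, which gives
   |f(a.)|^2 <= |f| |f(|a|^2 .)|, iterated along the dilations r^(2^n).

   If b <> 0 and |a| = 1, the kernels show that C_phi is unbounded.  If b <> 0 and |a| < 1, the
   kernel K_b shows |C_phi| > 1, and positivity of the two self-commutators fails on K_0 and on
   the kernel at the fixed point of phi.

   Whenever |a| < 1 or b = 0, the powers C_phi^n = C_(phi^n) are uniformly bounded, so the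
   Neumann series confines the spectrum to the closed unit disc, and the constant eigenfunction
   puts 1 into it: the spectral radius is 1. *)

theory Submission
  imports Defs "HOL-Complex_Analysis.Complex_Analysis" "HOL-Probability.Distributions"
begin

section \<open>Lebesgue measure on the complex plane\<close>

lemma borel_measurable_Complex_pair[measurable]:
  "(\<lambda>(x, y). Complex x y) \<in> borel_measurable (borel \<Otimes>\<^sub>M borel)"
proof -
  have "(\<lambda>p::real \<times> real. complex_of_real (fst p) + \<i> * complex_of_real (snd p))
      \<in> borel_measurable (borel \<Otimes>\<^sub>M borel)"
    by measurable
  then show ?thesis by (simp add: case_prod_beta' Complex_eq)
qed

lemma borel_measurable_cnj[measurable]:
  "f \<in> borel_measurable M \<Longrightarrow> (\<lambda>x. cnj (f x)) \<in> borel_measurable M"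
  by (rule borel_measurable_continuous_on[of cnj]) (auto intro: continuous_on_cnj continuous_on_id)

lemma lborel_complex_eq_distr_Complex:
  "(lborel :: complex measure) = distr (lborel \<Otimes>\<^sub>M lborel) borel (\<lambda>(x, y). Complex x y)"
proof (rule lborel_eqI)
  fix l u :: complex
  assume lu: "\<And>b. b \<in> Basis \<Longrightarrow> l \<bullet> b \<le> u \<bullet> b"
  have "Re l \<le> Re u" "Im l \<le> Im u"
    using lu[of 1] lu[of \<i>] by (simp_all add: Basis_complex_def inner_complex_def)
  moreover have "(\<lambda>(x, y). Complex x y) -` box l u \<inter> space (lborel \<Otimes>\<^sub>M lborel)
      = {Re l<..<Re u} \<times> {Im l<..<Im u}"
    by (auto simp: box_def Basis_complex_def inner_complex_def space_pair_measure)
  ultimately show "emeasure (distr (lborel \<Otimes>\<^sub>M lborel) borel (\<lambda>(x, y). Complex x y)) (box l u)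
      = (\<Prod>b\<in>Basis. (u - l) \<bullet> b)"
    by (simp add: emeasure_distr lborel.emeasure_pair_measure_Times ennreal_mult
        Basis_complex_def inner_complex_def)
qed simp

lemma nn_integral_lborel_complex_Re_Im:
  fixes f :: "complex \<Rightarrow> ennreal"
  assumes [measurable]: "f \<in> borel_measurable borel"
  shows "(\<integral>\<^sup>+z. f z \<partial>lborel) = (\<integral>\<^sup>+x. (\<integral>\<^sup>+y. f (Complex x y) \<partial>lborel) \<partial>lborel)"
  by (subst lborel_complex_eq_distr_Complex)
     (simp add: nn_integral_distr lborel.nn_integral_fst[symmetric] case_prod_beta')

lemma nn_integral_lborel_complex_Im_Re:
  fixes f :: "complex \<Rightarrow> ennreal"
  assumes [measurable]: "f \<in> borel_measurable borel"
  shows "(\<integral>\<^sup>+z. f z \<partial>lborel) = (\<integral>\<^sup>+y. (\<integral>\<^sup>+x. f (Complex x y) \<partial>lborel) \<partial>lborel)"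
  by (subst lborel_complex_eq_distr_Complex)
     (simp add: nn_integral_distr lborel_pair.nn_integral_snd[symmetric] case_prod_beta')

lemma distr_lborel_eqI:
  fixes T :: "'a::euclidean_space \<Rightarrow> 'a"
  assumes [measurable]: "T \<in> borel_measurable borel"
    and "\<And>f :: 'a \<Rightarrow> ennreal. f \<in> borel_measurable borel \<Longrightarrow>
      (\<integral>\<^sup>+z. f (T z) \<partial>lborel) = (\<integral>\<^sup>+z. f z \<partial>lborel)"
  shows "distr lborel borel T = lborel"
proof (rule measure_eqI)
  fix A assume "A \<in> sets (distr lborel borel T)"
  then have [measurable]: "A \<in> sets borel" by simp
  have "emeasure (distr lborel borel T) A = emeasure lborel (T -` A \<inter> space lborel)"
    by (rule emeasure_distr) simp_all
  also have "\<dots> = (\<integral>\<^sup>+z. indicator (T -` A \<inter> space lborel) z \<partial>lborel)"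
    by (rule nn_integral_indicator[symmetric]) (simp add: measurable_sets_borel[of T borel A])
  also have "\<dots> = (\<integral>\<^sup>+z. indicator A (T z) \<partial>lborel)"
    by (intro nn_integral_cong) (simp split: split_indicator)
  also have "\<dots> = emeasure lborel A"
    using assms(2)[of "indicator A"] by simp
  finally show "emeasure (distr lborel borel T) A = emeasure lborel A" .
qed simp

definition shear_Re :: "real \<Rightarrow> complex \<Rightarrow> complex" where
  "shear_Re t z = Complex (Re z + t * Im z) (Im z)"

definition shear_Im :: "real \<Rightarrow> complex \<Rightarrow> complex" where
  "shear_Im t z = Complex (Re z) (Im z + t * Re z)"

lemma borel_measurable_shear[measurable]:
  "shear_Re t \<in> borel_measurable borel" "shear_Im t \<in> borel_measurable borel"
  unfolding shear_Re_def shear_Im_def Complex_eq by measurable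

lemma distr_lborel_shear_Re: "distr lborel borel (shear_Re t) = lborel"
proof (rule distr_lborel_eqI)
  fix f :: "complex \<Rightarrow> ennreal" assume [measurable]: "f \<in> borel_measurable borel"
  have [measurable]: "(\<lambda>x. f (Complex x y)) \<in> borel_measurable borel" for y
    unfolding Complex_eq by measurable
  have "(\<integral>\<^sup>+z. f (shear_Re t z) \<partial>lborel)
      = (\<integral>\<^sup>+y. (\<integral>\<^sup>+x. f (Complex (x + t * y) y) \<partial>lborel) \<partial>lborel)"
    by (subst nn_integral_lborel_complex_Im_Re) (auto simp: shear_Re_def)
  also have "\<dots> = (\<integral>\<^sup>+y. (\<integral>\<^sup>+x. f (Complex x y) \<partial>lborel) \<partial>lborel)"
  proof (rule nn_integral_cong)
    fix y
    show "(\<integral>\<^sup>+x. f (Complex (x + t * y) y) \<partial>lborel) = (\<integral>\<^sup>+x. f (Complex x y) \<partial>lborel)"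
      using nn_integral_real_affine[of "\<lambda>x. f (Complex x y)" 1 "t * y"] by (simp add: add.commute)
  qed
  also have "\<dots> = (\<integral>\<^sup>+z. f z \<partial>lborel)"
    by (simp add: nn_integral_lborel_complex_Im_Re)
  finally show "(\<integral>\<^sup>+z. f (shear_Re t z) \<partial>lborel) = (\<integral>\<^sup>+z. f z \<partial>lborel)" .
qed simp

lemma distr_lborel_shear_Im: "distr lborel borel (shear_Im t) = lborel"
proof (rule distr_lborel_eqI)
  fix f :: "complex \<Rightarrow> ennreal" assume [measurable]: "f \<in> borel_measurable borel"
  have [measurable]: "(\<lambda>y. f (Complex x y)) \<in> borel_measurable borel" for x
    unfolding Complex_eq by measurable
  have "(\<integral>\<^sup>+z. f (shear_Im t z) \<partial>lborel)
      = (\<integral>\<^sup>+x. (\<integral>\<^sup>+y. f (Complex x (y + t * x)) \<partial>lborel) \<partial>lborel)"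
    by (subst nn_integral_lborel_complex_Re_Im) (auto simp: shear_Im_def)
  also have "\<dots> = (\<integral>\<^sup>+x. (\<integral>\<^sup>+y. f (Complex x y) \<partial>lborel) \<partial>lborel)"
  proof (rule nn_integral_cong)
    fix x
    show "(\<integral>\<^sup>+y. f (Complex x (y + t * x)) \<partial>lborel) = (\<integral>\<^sup>+y. f (Complex x y) \<partial>lborel)"
      using nn_integral_real_affine[of "\<lambda>y. f (Complex x y)" 1 "t * x"] by (simp add: add.commute)
  qed
  also have "\<dots> = (\<integral>\<^sup>+z. f z \<partial>lborel)"
    by (simp add: nn_integral_lborel_complex_Re_Im)
  finally show "(\<integral>\<^sup>+z. f (shear_Im t z) \<partial>lborel) = (\<integral>\<^sup>+z. f z \<partial>lborel)" .
qed simp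

text \<open>Paeth's factorisation of a rotation by an angle \<open>\<theta>\<close> into three shears, with
  \<open>s = - tan (\<theta>/2)\<close>; it fails only for the half-turn.\<close>
lemma rotation_eq_shears:
  fixes u :: complex
  assumes "cmod u = 1" "u \<noteq> -1"
  defines "s \<equiv> - Im u / (1 + Re u)"
  shows "(\<lambda>z. u * z) = shear_Re s \<circ> shear_Im (Im u) \<circ> shear_Re s"
proof -
  have n: "(Re u)\<^sup>2 + (Im u)\<^sup>2 = 1" using assms(1) by (simp add: cmod_def)
  have "Re u \<noteq> -1"
    using n assms(2) by (auto simp: complex_eq_iff)
  moreover have "Re u \<ge> -1"
    using abs_Re_le_cmod[of u] assms(1) by linarith
  ultimately have pos: "1 + Re u > 0" by linarith
  have e1: "1 + s * Im u = Re u"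
    using pos n unfolding s_def by (simp add: field_simps power2_eq_square)
  have "s * (2 + s * Im u) = s * (1 + (1 + s * Im u))" by simp
  also have "\<dots> = - Im u" using pos by (simp only: e1) (simp add: s_def)
  finally have e2: "s * (2 + s * Im u) = - Im u" .
  show ?thesis
  proof
    fix z
    have "(shear_Re s \<circ> shear_Im (Im u) \<circ> shear_Re s) z
        = Complex (Re z * (1 + s * Im u) + Im z * (s * (2 + s * Im u)))
            (Im u * Re z + (1 + s * Im u) * Im z)"
      by (simp add: shear_Re_def shear_Im_def algebra_simps)
    also have "\<dots> = u * z" using e1 e2 by (simp add: complex_eq_iff algebra_simps)
    finally show "u * z = (shear_Re s \<circ> shear_Im (Im u) \<circ> shear_Re s) z" by simp
  qed
qed

lemma distr_lborel_rotation:
  fixes u :: complex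
  assumes "cmod u = 1"
  shows "distr lborel borel (\<lambda>z. u * z) = lborel"
proof (cases "u = -1")
  case True
  have "lborel = density (distr lborel borel (\<lambda>x::complex. 0 + (-1) *\<^sub>R x)) (\<lambda>_. \<bar>-1::real\<bar> ^ DIM(complex))"
    by (rule lborel_affine) simp
  then show ?thesis using True by (simp add: density_1)
next
  case False
  let ?s = "- Im u / (1 + Re u)"
  have "distr lborel borel (\<lambda>z. u * z)
      = distr lborel borel (shear_Re ?s \<circ> shear_Im (Im u) \<circ> shear_Re ?s)"
    by (simp only: rotation_eq_shears[OF assms False])
  also have "\<dots> = distr (distr (distr lborel borel (shear_Re ?s)) borel (shear_Im (Im u))) borel (shear_Re ?s)"
    by (simp add: distr_distr comp_assoc)
  finally show ?thesis by (simp add: distr_lborel_shear_Re distr_lborel_shear_Im)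
qed

context
  fixes u :: complex
  assumes u: "cmod u = 1"
begin

lemma lborel_integral_rotate:
  fixes g :: "complex \<Rightarrow> 'b::{banach, second_countable_topology}"
  assumes [measurable]: "g \<in> borel_measurable borel"
  shows "(\<integral>z. g (u * z) \<partial>lborel) = (\<integral>z. g z \<partial>lborel)"
  using integral_distr[of "\<lambda>z. u * z" lborel borel g] by (simp add: distr_lborel_rotation[OF u])

lemma lborel_integrable_rotate_iff:
  fixes g :: "complex \<Rightarrow> 'b::{banach, second_countable_topology}"
  assumes [measurable]: "g \<in> borel_measurable borel"
  shows "integrable lborel (\<lambda>z. g (u * z)) \<longleftrightarrow> integrable lborel g"
  using integrable_distr_eq[of "\<lambda>z. u * z" lborel borel g] by (simp add: distr_lborel_rotation[OF u])

lemma lborel_nn_integral_rotate: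
  fixes g :: "complex \<Rightarrow> ennreal"
  assumes [measurable]: "g \<in> borel_measurable borel"
  shows "(\<integral>\<^sup>+z. g (u * z) \<partial>lborel) = (\<integral>\<^sup>+z. g z \<partial>lborel)"
  using nn_integral_distr[of "\<lambda>z. u * z" lborel borel g] by (simp add: distr_lborel_rotation[OF u])

end

lemma lborel_integral_translate:
  fixes g :: "'a::euclidean_space \<Rightarrow> 'b::{banach, second_countable_topology}"
  assumes [measurable]: "g \<in> borel_measurable borel"
  shows "(\<integral>z. g (c + z) \<partial>lborel) = (\<integral>z. g z \<partial>lborel)"
  using integral_distr[of "(+) c" lborel borel g] by (simp add: lborel_distr_plus)

lemma lborel_integrable_translate_iff:
  fixes g :: "'a::euclidean_space \<Rightarrow> 'b::{banach, second_countable_topology}"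
  assumes [measurable]: "g \<in> borel_measurable borel"
  shows "integrable lborel (\<lambda>z. g (c + z)) \<longleftrightarrow> integrable lborel g"
  using integrable_distr_eq[of "(+) c" lborel borel g] by (simp add: lborel_distr_plus)

lemma integrable_lborel_pair_bound:
  fixes H :: "'a::euclidean_space \<Rightarrow> 'b::euclidean_space \<Rightarrow> 'c::{banach, second_countable_topology}"
  assumes [measurable]: "(\<lambda>(u, z). H u z) \<in> borel_measurable (lborel \<Otimes>\<^sub>M lborel)"
    and F: "integrable lborel F" and G: "integrable lborel G"
    and le: "\<And>u z. norm (H u z) \<le> F u * G z"
  shows "integrable (lborel \<Otimes>\<^sub>M lborel) (\<lambda>(u, z). H u z)"
  unfolding integrable_iff_bounded
proof
  have [measurable]: "F \<in> borel_measurable borel" "G \<in> borel_measurable borel"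
    using F G by simp_all
  have "norm (H u z) \<le> \<bar>F u\<bar> * \<bar>G z\<bar>" for u z
    using le[of u z] by (simp add: abs_mult[symmetric])
  then have "(\<integral>\<^sup>+p. ennreal (norm ((\<lambda>(u, z). H u z) p)) \<partial>(lborel \<Otimes>\<^sub>M lborel))
      \<le> (\<integral>\<^sup>+u. (\<integral>\<^sup>+z. ennreal \<bar>F u\<bar> * ennreal \<bar>G z\<bar> \<partial>lborel) \<partial>lborel)"
    by (subst lborel.nn_integral_fst[symmetric])
       (auto intro!: nn_integral_mono ennreal_leI simp: ennreal_mult[symmetric])
  also have "\<dots> = (\<integral>\<^sup>+u. ennreal \<bar>F u\<bar> \<partial>lborel) * (\<integral>\<^sup>+z. ennreal \<bar>G z\<bar> \<partial>lborel)"
    by (simp add: nn_integral_cmult nn_integral_multc)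
  also have "\<dots> < \<infinity>"
    using F G by (simp add: integrable_iff_bounded ennreal_mult_less_top)
  finally show "(\<integral>\<^sup>+p. ennreal (norm ((\<lambda>(u, z). H u z) p)) \<partial>(lborel \<Otimes>\<^sub>M lborel)) < \<infinity>" .
qed simp

section \<open>Gaussian integrals and the mean value property\<close>

lemma nn_integral_gaussian_real:
  assumes t: "t > 0"
  shows "(\<integral>\<^sup>+x. ennreal (exp (- t * x\<^sup>2)) \<partial>lborel) = ennreal (sqrt pi / sqrt t)"
proof -
  have "has_bochner_integral lborel (\<lambda>x::real. exp (- x\<^sup>2)) (sqrt pi)"
    using has_bochner_integral_even_function[OF gaussian_moment_0] by simp
  then have "(\<integral>\<^sup>+x. ennreal (exp (- x\<^sup>2)) \<partial>lborel) = ennreal (sqrt pi)"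
    by (subst nn_integral_eq_integrable) (auto simp: has_bochner_integral_iff)
  then have "ennreal (sqrt pi) = (\<integral>\<^sup>+x. ennreal (exp (- x\<^sup>2)) \<partial>lborel)" by simp
  also have "\<dots> = ennreal \<bar>sqrt t\<bar> * (\<integral>\<^sup>+x. ennreal (exp (- (0 + sqrt t * x)\<^sup>2)) \<partial>lborel)"
    using t by (intro nn_integral_real_affine) auto
  also have "\<dots> = ennreal (sqrt t) * (\<integral>\<^sup>+x. ennreal (exp (- t * x\<^sup>2)) \<partial>lborel)"
    using t by (simp add: power_mult_distrib)
  finally have "ennreal (1 / sqrt t) * ennreal (sqrt pi)
      = ennreal (1 / sqrt t) * ennreal (sqrt t) * (\<integral>\<^sup>+x. ennreal (exp (- t * x\<^sup>2)) \<partial>lborel)"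
    by (simp add: mult.assoc)
  then show ?thesis
    using t by (simp add: ennreal_mult[symmetric])
qed

lemma has_bochner_integral_gaussian_complex:
  assumes t: "t > 0"
  shows "has_bochner_integral lborel (\<lambda>z::complex. exp (- t * (cmod z)\<^sup>2)) (pi / t)"
proof (rule has_bochner_integral_nn_integral)
  have g: "(\<integral>\<^sup>+y. ennreal (exp (- (t * y\<^sup>2))) \<partial>lborel) = ennreal (sqrt pi / sqrt t)"
    using nn_integral_gaussian_real[OF t] by simp
  have "(\<integral>\<^sup>+z. ennreal (exp (- t * (cmod z)\<^sup>2)) \<partial>lborel)
      = (\<integral>\<^sup>+x. (\<integral>\<^sup>+y. ennreal (exp (- t * x\<^sup>2)) * ennreal (exp (- t * y\<^sup>2)) \<partial>lborel) \<partial>lborel)"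
    by (subst nn_integral_lborel_complex_Re_Im)
       (auto simp: cmod_def ennreal_mult[symmetric] exp_add[symmetric] algebra_simps intro!: nn_integral_cong)
  also have "\<dots> = ennreal (sqrt pi / sqrt t) * ennreal (sqrt pi / sqrt t)"
    by (simp add: nn_integral_cmult nn_integral_multc g)
  also have "\<dots> = ennreal (pi / t)"
    using t by (simp add: ennreal_mult[symmetric] real_sqrt_mult[symmetric])
  finally show "(\<integral>\<^sup>+z. ennreal (exp (- t * (cmod z)\<^sup>2)) \<partial>lborel) = ennreal (pi / t)" .
qed (use t in auto)

lemma integrable_gaussian_complex: "t > 0 \<Longrightarrow> integrable lborel (\<lambda>z::complex. exp (- t * (cmod z)\<^sup>2))"
  using has_bochner_integral_gaussian_complex by (auto simp: has_bochner_integral_iff)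

lemma integral_gaussian_complex: "t > 0 \<Longrightarrow> (\<integral>z. exp (- t * (cmod z)\<^sup>2) \<partial>lborel) = pi / t"
  using has_bochner_integral_gaussian_complex by (auto simp: has_bochner_integral_iff)

lemma fock_weight_nonneg[simp]: "0 \<le> fock_weight z"
  by (simp add: fock_weight_def)

lemma borel_measurable_fock_weight[measurable]: "fock_weight \<in> borel_measurable borel"
  unfolding fock_weight_def[abs_def] by measurable

lemma integrable_fock_weight: "integrable lborel fock_weight"
  using integrable_divide[OF integrable_gaussian_complex[of 1]] by (simp add: fock_weight_def[abs_def])

lemma integral_fock_weight: "(\<integral>z. fock_weight z \<partial>lborel) = 1"
  using integral_gaussian_complex[of 1] by (simp add: fock_weight_def[abs_def])

lemma fock_weight_rotate: "cmod u = 1 \<Longrightarrow> fock_weight (u * z) = fock_weight z"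
  by (simp add: fock_weight_def norm_mult)

lemma fock_weight_eq_exp: "complex_of_real (fock_weight z) = exp (- complex_of_real ((cmod z)\<^sup>2)) / pi"
  by (simp only: fock_weight_def of_real_divide of_real_minus[symmetric] exp_of_real)

lemma borel_measurable_holomorphic: "h holomorphic_on UNIV \<Longrightarrow> h \<in> borel_measurable borel"
  by (intro borel_measurable_continuous_onI holomorphic_on_imp_continuous_on)

lemma holomorphic_circle_mean:
  assumes hol: "h holomorphic_on UNIV"
  shows "((\<lambda>t. h (z * exp (2 * of_real pi * \<i> * of_real t))) has_integral h 0) {0..1}"
proof -
  define g where "g = (\<lambda>u. h (z * u))"
  have "g holomorphic_on cball 0 1"
    unfolding g_def by (rule holomorphic_on_compose_gen[OF _ hol, unfolded o_def]) (auto intro: holomorphic_intros)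
  then have "((\<lambda>u. g u / (u - 0)) has_contour_integral (2 * of_real pi * \<i> * g 0)) (circlepath 0 1)"
    by (rule Cauchy_integral_circlepath_simple) simp
  then have "((\<lambda>x. g (circlepath 0 1 x) / (circlepath 0 1 x - 0) *
      vector_derivative (circlepath 0 1) (at x within {0..1})) has_integral (2 * of_real pi * \<i> * h 0)) {0..1}"
    by (simp add: has_contour_integral_def g_def)
  then have "((\<lambda>x. (2 * of_real pi * \<i>) * h (z * exp (2 * of_real pi * \<i> * of_real x))) has_integral (2 * of_real pi * \<i> * h 0)) {0..1}"
  proof (rule has_integral_eq[rotated])
    fix x :: real assume "x \<in> {0..1}"
    then have "vector_derivative (circlepath 0 1) (at x within {0..1})
        = 2 * of_real pi * \<i> * exp (2 * of_real pi * \<i> * of_real x)"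
      using vector_derivative_circlepath01[of x 0 1] by simp
    then show "g (circlepath 0 1 x) / (circlepath 0 1 x - 0) *
        vector_derivative (circlepath 0 1) (at x within {0..1})
        = (2 * of_real pi * \<i>) * h (z * exp (2 * of_real pi * \<i> * of_real x))"
      by (simp add: circlepath g_def)
  qed
  then have "((\<lambda>x. (2 * of_real pi * \<i>) * h (z * exp (2 * of_real pi * \<i> * of_real x)) * (1 / (2 * of_real pi * \<i>)))
      has_integral (2 * of_real pi * \<i> * h 0) * (1 / (2 * of_real pi * \<i>))) {0..1}"
    by (rule has_integral_mult_left)
  then show ?thesis by simp
qed

lemma lborel_holomorphic_circle_mean:
  assumes hol: "h holomorphic_on UNIV"
  shows "(\<integral>t. indicator {0..1} t *\<^sub>R h (exp (2 * of_real pi * \<i> * of_real t) * z) \<partial>lborel) = h 0"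
proof -
  let ?f = "\<lambda>t::real. h (z * exp (2 * of_real pi * \<i> * of_real t))"
  have "continuous_on {0..1} ?f"
    by (intro continuous_on_compose2[OF holomorphic_on_imp_continuous_on[OF hol]] continuous_intros) auto
  then have "(LINT t:{0..1}|lborel. ?f t) = integral {0..1} ?f"
    by (intro set_borel_integral_eq_integral(2) borel_integrable_atLeastAtMost')
  also have "\<dots> = h 0" using holomorphic_circle_mean[OF hol] by (rule integral_unique)
  finally show ?thesis by (simp add: set_lebesgue_integral_def mult.commute)
qed

lemma integrable_rotation_average:
  fixes g :: "complex \<Rightarrow> 'b::{banach, second_countable_topology}"
  assumes g: "integrable lborel g"
    and e: "\<And>t. cmod (e t) = 1" and [measurable]: "e \<in> borel_measurable borel"
  shows "integrable (lborel \<Otimes>\<^sub>M lborel) (\<lambda>(t, z). indicator {0..1::real} t *\<^sub>R g (e t * z))"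
  unfolding integrable_iff_bounded
proof
  have [measurable]: "g \<in> borel_measurable borel" using g by simp
  show "(\<lambda>(t, z). indicator {0..1::real} t *\<^sub>R g (e t * z)) \<in> borel_measurable (lborel \<Otimes>\<^sub>M lborel)"
    by measurable
  define N where "N = (\<integral>\<^sup>+z. ennreal (norm (g z)) \<partial>lborel)"
  have "(\<integral>\<^sup>+z. ennreal (norm (g (e t * z))) \<partial>lborel) = N" for t :: real
    unfolding N_def by (rule lborel_nn_integral_rotate[OF e]) simp
  then have "(\<integral>\<^sup>+p. ennreal (norm ((\<lambda>(t, z). indicator {0..1::real} t *\<^sub>R g (e t * z)) p))
      \<partial>(lborel \<Otimes>\<^sub>M lborel)) = (\<integral>\<^sup>+t. indicator {0..1::real} t * N \<partial>lborel)"
    by (subst lborel.nn_integral_fst[symmetric]) (auto intro!: nn_integral_cong split: split_indicator)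
  also have "\<dots> < \<infinity>"
    using g by (simp add: nn_integral_multc N_def integrable_iff_bounded ennreal_mult_less_top)
  finally show "(\<integral>\<^sup>+p. ennreal (norm ((\<lambda>(t, z). indicator {0..1::real} t *\<^sub>R g (e t * z)) p))
      \<partial>(lborel \<Otimes>\<^sub>M lborel)) < \<infinity>" .
qed

text \<open>Averaging over rotations turns the integral into a circle mean of \<open>h\<close>, which is \<open>h 0\<close>
  by Cauchy's formula, while the rotation invariance of the weight leaves the integral unchanged.\<close>
lemma integral_holomorphic_fock_weight:
  assumes hol: "h holomorphic_on UNIV"
    and int: "integrable lborel (\<lambda>z. h z * fock_weight z)"
  shows "(\<integral>z. h z * fock_weight z \<partial>lborel) = h 0"
proof -
  have [measurable]: "h \<in> borel_measurable borel" by (rule borel_measurable_holomorphic[OF hol])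
  define e where "e = (\<lambda>t::real. exp (2 * of_real pi * \<i> * of_real t) :: complex)"
  have e: "cmod (e t) = 1" for t by (simp add: e_def norm_exp_eq_Re)
  define F where "F = (\<lambda>t z. indicator {0..1::real} t *\<^sub>R (h (e t * z) * fock_weight z))"
  have F_eq: "F t z = indicator {0..1::real} t *\<^sub>R (h (e t * z) * fock_weight (e t * z))" for t z
    by (simp add: F_def fock_weight_rotate[OF e])
  have "integrable (lborel \<Otimes>\<^sub>M lborel) (\<lambda>(t, z). F t z)"
    using integrable_rotation_average[OF int e] by (simp add: F_eq e_def)
  then have "(\<integral>z. (\<integral>t. F t z \<partial>lborel) \<partial>lborel) = (\<integral>t. (\<integral>z. F t z \<partial>lborel) \<partial>lborel)"
    by (rule lborel_pair.Fubini_integral)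
  moreover have "(\<integral>t. F t z \<partial>lborel) = h 0 * fock_weight z" for z
    using lborel_holomorphic_circle_mean[OF hol, of z]
    by (simp add: F_def e_def scaleR_conv_of_real mult.assoc[symmetric])
  moreover have "(\<integral>z. F t z \<partial>lborel) = indicator {0..1} t *\<^sub>R (\<integral>z. h z * fock_weight z \<partial>lborel)" for t
    using lborel_integral_rotate[OF e, of "\<lambda>z. h z * fock_weight z"] by (simp add: F_eq)
  ultimately show ?thesis
    by (simp add: integral_fock_weight)
qed

section \<open>The Fock space\<close>

definition fock_square_integrable :: "(complex \<Rightarrow> complex) \<Rightarrow> bool" where
  "fock_square_integrable f \<longleftrightarrow>
     f \<in> borel_measurable borel \<and> integrable lborel (\<lambda>z. (cmod (f z))\<^sup>2 * fock_weight z)"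

lemma fock_space_holomorphic: "f \<in> fock_space \<Longrightarrow> f holomorphic_on UNIV"
  by (simp add: fock_space_def)

lemma fock_space_borel_measurable: "f \<in> fock_space \<Longrightarrow> f \<in> borel_measurable borel"
  by (simp add: fock_space_def borel_measurable_holomorphic)

lemma fock_space_square_integrable: "f \<in> fock_space \<Longrightarrow> fock_square_integrable f"
  by (simp add: fock_space_def fock_square_integrable_def borel_measurable_holomorphic)

lemma fock_spaceI:
  "f holomorphic_on UNIV \<Longrightarrow> integrable lborel (\<lambda>z. (cmod (f z))\<^sup>2 * fock_weight z) \<Longrightarrow> f \<in> fock_space"
  by (simp add: fock_space_def)

lemma fock_norm_nonneg: "fock_norm f \<ge> 0"
  by (simp add: fock_norm_def)

lemma fock_norm_power2: "(fock_norm f)\<^sup>2 = (\<integral>z. (cmod (f z))\<^sup>2 * fock_weight z \<partial>lborel)"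
proof -
  have "0 \<le> (\<integral>z. (cmod (f z))\<^sup>2 * fock_weight z \<partial>lborel)"
    by (intro integral_nonneg_AE) auto
  then show ?thesis by (simp add: fock_norm_def)
qed

lemma fock_integrand_norm_le:
  "cmod (f z * cnj (g z) * fock_weight z) \<le> ((cmod (f z))\<^sup>2 * fock_weight z + (cmod (g z))\<^sup>2 * fock_weight z) / 2"
proof -
  have "2 * (cmod (f z) * cmod (g z)) \<le> (cmod (f z))\<^sup>2 + (cmod (g z))\<^sup>2"
    using sum_squares_bound[of "cmod (f z)" "cmod (g z)"] by (simp add: power2_diff)
  then have "2 * (cmod (f z) * cmod (g z)) * fock_weight z \<le> ((cmod (f z))\<^sup>2 + (cmod (g z))\<^sup>2) * fock_weight z"
    by (rule mult_right_mono) simp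
  then show ?thesis by (simp add: norm_mult algebra_simps)
qed

context
  fixes f g :: "complex \<Rightarrow> complex"
  assumes f: "fock_square_integrable f" and g: "fock_square_integrable g"
begin

lemma integrable_fock_inner_integrand:
  "integrable lborel (\<lambda>z. f z * cnj (g z) * fock_weight z)"
proof (rule Bochner_Integration.integrable_bound)
  show "integrable lborel (\<lambda>z. ((cmod (f z))\<^sup>2 * fock_weight z + (cmod (g z))\<^sup>2 * fock_weight z) / 2)"
    using f g by (auto simp: fock_square_integrable_def)
  have [measurable]: "f \<in> borel_measurable borel" "g \<in> borel_measurable borel"
    using f g by (auto simp: fock_square_integrable_def)
  show "(\<lambda>z. f z * cnj (g z) * fock_weight z) \<in> borel_measurable lborel" by measurable
  show "AE z in lborel. norm (f z * cnj (g z) * fock_weight z)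
      \<le> norm (((cmod (f z))\<^sup>2 * fock_weight z + (cmod (g z))\<^sup>2 * fock_weight z) / 2)"
    using fock_integrand_norm_le[of f _ g] by (intro AE_I2) (simp add: abs_of_nonneg)
qed

lemma integrable_fock_norm_product:
  "integrable lborel (\<lambda>z. cmod (f z) * cmod (g z) * fock_weight z)"
  using integrable_norm[OF integrable_fock_inner_integrand] by (simp add: norm_mult)

lemma integral_fock_norm_product_le:
  "(\<integral>z. cmod (f z) * cmod (g z) * fock_weight z \<partial>lborel) \<le> fock_norm f * fock_norm g"
proof -
  have [measurable]: "f \<in> borel_measurable borel" "g \<in> borel_measurable borel"
    using f g by (auto simp: fock_square_integrable_def)
  define C where "C = (\<integral>z. cmod (f z) * cmod (g z) * fock_weight z \<partial>lborel)"
  define A where "A = (\<integral>z. (cmod (f z))\<^sup>2 * fock_weight z \<partial>lborel)"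
  define B where "B = (\<integral>z. (cmod (g z))\<^sup>2 * fock_weight z \<partial>lborel)"
  have A0: "A \<ge> 0" and B0: "B \<ge> 0" and C0: "C \<ge> 0"
    unfolding A_def B_def C_def by (auto intro: integral_nonneg_AE)
  let ?F = "\<lambda>z. ennreal (cmod (f z) * sqrt (fock_weight z))"
  let ?G = "\<lambda>z. ennreal (cmod (g z) * sqrt (fock_weight z))"
  have "(\<integral>\<^sup>+z. ?F z * ?G z \<partial>lborel)\<^sup>2 \<le> (\<integral>\<^sup>+z. ?F z ^ 2 \<partial>lborel) * (\<integral>\<^sup>+z. ?G z ^ 2 \<partial>lborel)"
    by (rule Cauchy_Schwarz_nn_integral) measurable
  moreover have "(\<integral>\<^sup>+z. ?F z * ?G z \<partial>lborel) = ennreal C"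
    unfolding C_def using integrable_fock_norm_product
    by (subst nn_integral_eq_integral[symmetric])
       (auto intro!: nn_integral_cong simp: ennreal_mult[symmetric] algebra_simps)
  moreover have sq: "(\<integral>\<^sup>+z. (ennreal (cmod (h z) * sqrt (fock_weight z)))\<^sup>2 \<partial>lborel)
      = ennreal (\<integral>z. (cmod (h z))\<^sup>2 * fock_weight z \<partial>lborel)"
    if "fock_square_integrable h" for h
  proof -
    have "(\<integral>\<^sup>+z. (ennreal (cmod (h z) * sqrt (fock_weight z)))\<^sup>2 \<partial>lborel)
        = (\<integral>\<^sup>+z. ennreal ((cmod (h z))\<^sup>2 * fock_weight z) \<partial>lborel)"
      by (intro nn_integral_cong) (subst ennreal_power, auto simp: power_mult_distrib)
    also have "\<dots> = ennreal (\<integral>z. (cmod (h z))\<^sup>2 * fock_weight z \<partial>lborel)"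
      using that by (intro nn_integral_eq_integral) (auto simp: fock_square_integrable_def)
    finally show ?thesis .
  qed
  ultimately have "ennreal (C\<^sup>2) \<le> ennreal (A * B)"
    using A0 B0 C0 sq[OF f] sq[OF g] by (simp add: ennreal_power ennreal_mult A_def B_def)
  then have "C\<^sup>2 \<le> A * B" using A0 B0 by (simp add: ennreal_le_iff)
  then have "C \<le> sqrt (A * B)"
    using C0 by (simp add: real_le_rsqrt)
  then have "C \<le> sqrt A * sqrt B"
    by (simp add: real_sqrt_mult)
  then show ?thesis unfolding A_def B_def C_def fock_norm_def .
qed

lemma fock_inner_Cauchy_Schwarz: "cmod (fock_inner f g) \<le> fock_norm f * fock_norm g"
proof -
  have "cmod (fock_inner f g) \<le> (\<integral>z. norm (f z * cnj (g z) * fock_weight z) \<partial>lborel)"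
    unfolding fock_inner_def by (rule integral_norm_bound)
  also have "\<dots> = (\<integral>z. cmod (f z) * cmod (g z) * fock_weight z \<partial>lborel)"
    by (simp add: norm_mult)
  finally show ?thesis using integral_fock_norm_product_le by linarith
qed

end

lemma fock_inner_self:
  "fock_inner f f = (fock_norm f)\<^sup>2"
proof -
  have "fock_inner f f = (\<integral>z. complex_of_real ((cmod (f z))\<^sup>2 * fock_weight z) \<partial>lborel)"
    unfolding fock_inner_def
    by (intro Bochner_Integration.integral_cong refl) (simp add: complex_norm_square[symmetric])
  also have "\<dots> = complex_of_real (\<integral>z. (cmod (f z))\<^sup>2 * fock_weight z \<partial>lborel)"
    by (rule integral_complex_of_real)
  finally show ?thesis by (simp add: fock_norm_power2)
qed

lemma fock_inner_commute: "fock_inner g f = cnj (fock_inner f g)"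
proof -
  have "cnj (fock_inner f g) = (\<integral>z. cnj (f z * cnj (g z) * fock_weight z) \<partial>lborel)"
    unfolding fock_inner_def by (rule Bochner_Integration.integral_cnj[symmetric])
  then show ?thesis by (simp add: fock_inner_def mult_ac)
qed

lemma fock_inner_scale_right: "fock_inner f (\<lambda>z. c * g z) = cnj c * fock_inner f g"
proof -
  have "fock_inner f (\<lambda>z. c * g z) = (\<integral>z. cnj c * (f z * cnj (g z) * fock_weight z) \<partial>lborel)"
    unfolding fock_inner_def by (intro Bochner_Integration.integral_cong refl) (simp add: algebra_simps)
  then show ?thesis unfolding fock_inner_def by simp
qed

lemma fock_square_integrable_add:
  assumes f: "fock_square_integrable f" and g: "fock_square_integrable g"
  shows "fock_square_integrable (\<lambda>z. f z + g z)"
proof -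
  have [measurable]: "f \<in> borel_measurable borel" "g \<in> borel_measurable borel"
    using f g by (auto simp: fock_square_integrable_def)
  have "integrable lborel (\<lambda>z. (cmod (f z + g z))\<^sup>2 * fock_weight z)"
  proof (rule Bochner_Integration.integrable_bound)
    show "integrable lborel (\<lambda>z. 2 * ((cmod (f z))\<^sup>2 * fock_weight z) + 2 * ((cmod (g z))\<^sup>2 * fock_weight z))"
      using f g by (auto simp: fock_square_integrable_def)
    show "(\<lambda>z. (cmod (f z + g z))\<^sup>2 * fock_weight z) \<in> borel_measurable lborel" by measurable
    show "AE z in lborel. norm ((cmod (f z + g z))\<^sup>2 * fock_weight z)
        \<le> norm (2 * ((cmod (f z))\<^sup>2 * fock_weight z) + 2 * ((cmod (g z))\<^sup>2 * fock_weight z))"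
    proof (rule AE_I2)
      fix z
      have "(cmod (f z + g z))\<^sup>2 \<le> (cmod (f z) + cmod (g z))\<^sup>2"
        by (simp add: power_mono norm_triangle_ineq)
      also have "\<dots> \<le> 2 * (cmod (f z))\<^sup>2 + 2 * (cmod (g z))\<^sup>2"
        using sum_squares_bound[of "cmod (f z)" "cmod (g z)"] by (simp add: power2_sum)
      finally have "(cmod (f z + g z))\<^sup>2 * fock_weight z
          \<le> (2 * (cmod (f z))\<^sup>2 + 2 * (cmod (g z))\<^sup>2) * fock_weight z"
        by (simp add: mult_right_mono)
      then show "norm ((cmod (f z + g z))\<^sup>2 * fock_weight z)
          \<le> norm (2 * ((cmod (f z))\<^sup>2 * fock_weight z) + 2 * ((cmod (g z))\<^sup>2 * fock_weight z))"
        by (simp add: algebra_simps)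
    qed
  qed
  then show ?thesis by (simp add: fock_square_integrable_def)
qed

lemma fock_square_integrable_scale:
  assumes f: "fock_square_integrable f"
  shows "fock_square_integrable (\<lambda>z. c * f z)"
proof -
  have [measurable]: "f \<in> borel_measurable borel" using f by (simp add: fock_square_integrable_def)
  have "integrable lborel (\<lambda>z. (cmod c)\<^sup>2 * ((cmod (f z))\<^sup>2 * fock_weight z))"
    using f by (simp add: fock_square_integrable_def)
  then show ?thesis by (simp add: fock_square_integrable_def norm_mult power_mult_distrib mult.assoc)
qed

lemma fock_norm_scale: "fock_norm (\<lambda>z. c * f z) = cmod c * fock_norm f"
  by (simp add: fock_norm_def norm_mult power_mult_distrib mult.assoc real_sqrt_mult)

lemma fock_space_add: "f \<in> fock_space \<Longrightarrow> g \<in> fock_space \<Longrightarrow> (\<lambda>z. f z + g z) \<in> fock_space"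
  using fock_square_integrable_add[OF fock_space_square_integrable fock_space_square_integrable, of f g]
  by (auto simp: fock_space_def fock_square_integrable_def intro: holomorphic_intros)

lemma fock_space_scale: "f \<in> fock_space \<Longrightarrow> (\<lambda>z. c * f z) \<in> fock_space"
  using fock_square_integrable_scale[OF fock_space_square_integrable, of f c]
  by (auto simp: fock_space_def fock_square_integrable_def intro: holomorphic_intros)

lemma fock_space_diff: "f \<in> fock_space \<Longrightarrow> g \<in> fock_space \<Longrightarrow> (\<lambda>z. f z - g z) \<in> fock_space"
  using fock_space_add[of f "\<lambda>z. (-1) * g z"] fock_space_scale[of g "-1"] by simp

lemma fock_space_const: "(\<lambda>z. c) \<in> fock_space"
  using integrable_fock_weight by (intro fock_spaceI) auto

lemma fock_norm_one: "fock_norm (\<lambda>z. 1) = 1"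
  by (simp add: fock_norm_def integral_fock_weight)

section \<open>Reproducing kernels\<close>

definition fock_kernel :: "complex \<Rightarrow> complex \<Rightarrow> complex" where
  "fock_kernel v = (\<lambda>z. exp (cnj v * z))"

lemma fock_kernel_holomorphic: "fock_kernel v holomorphic_on UNIV"
  unfolding fock_kernel_def by (intro holomorphic_intros)

lemma fock_kernel_square_translate:
  "(cmod (fock_kernel v (v + u)))\<^sup>2 * fock_weight (v + u) = exp ((cmod v)\<^sup>2) * fock_weight u"
proof -
  have "(cmod (exp x))\<^sup>2 = exp (2 * Re x)" for x :: complex
    by (simp add: power2_eq_square exp_add[symmetric])
  then have "(cmod (fock_kernel v (v + u)))\<^sup>2 * fock_weight (v + u)
      = exp (2 * Re (cnj v * (v + u))) * (exp (- (cmod (v + u))\<^sup>2) / pi)"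
    by (simp only: fock_kernel_def fock_weight_def)
  also have "\<dots> = exp (2 * Re (cnj v * (v + u)) - (cmod (v + u))\<^sup>2) / pi"
    by (simp only: exp_diff exp_minus) (simp add: field_simps)
  also have "2 * Re (cnj v * (v + u)) - (cmod (v + u))\<^sup>2 = (cmod v)\<^sup>2 - (cmod u)\<^sup>2"
    unfolding cmod_power2 by (simp add: algebra_simps power2_eq_square)
  finally show ?thesis
    by (simp add: fock_weight_def exp_diff exp_minus field_simps)
qed

lemma
  shows integrable_fock_kernel_square: "integrable lborel (\<lambda>z. (cmod (fock_kernel v z))\<^sup>2 * fock_weight z)"
    and integral_fock_kernel_square: "(\<integral>z. (cmod (fock_kernel v z))\<^sup>2 * fock_weight z \<partial>lborel) = exp ((cmod v)\<^sup>2)"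
proof -
  define G where "G = (\<lambda>z. (cmod (fock_kernel v z))\<^sup>2 * fock_weight z)"
  have [measurable]: "G \<in> borel_measurable borel" unfolding G_def fock_kernel_def by measurable
  have "integrable lborel (\<lambda>u. G (v + u))"
    using integrable_fock_weight by (simp add: G_def fock_kernel_square_translate)
  then have "integrable lborel G"
    using lborel_integrable_translate_iff[of G v] by simp
  then show "integrable lborel (\<lambda>z. (cmod (fock_kernel v z))\<^sup>2 * fock_weight z)"
    unfolding G_def .
  have "(\<integral>z. G z \<partial>lborel) = (\<integral>u. G (v + u) \<partial>lborel)"
    by (rule lborel_integral_translate[symmetric]) simp
  also have "\<dots> = exp ((cmod v)\<^sup>2)" by (simp add: G_def fock_kernel_square_translate integral_fock_weight)
  finally show "(\<integral>z. (cmod (fock_kernel v z))\<^sup>2 * fock_weight z \<partial>lborel) = exp ((cmod v)\<^sup>2)"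
    unfolding G_def .
qed

lemma fock_kernel_in_fock_space: "fock_kernel v \<in> fock_space"
  using fock_kernel_holomorphic integrable_fock_kernel_square by (rule fock_spaceI)

lemma fock_norm_kernel: "fock_norm (fock_kernel v) = exp ((cmod v)\<^sup>2 / 2)"
proof -
  have "exp ((cmod v)\<^sup>2) = (exp ((cmod v)\<^sup>2 / 2))\<^sup>2"
    by (simp add: power2_eq_square flip: exp_add)
  then show ?thesis by (simp add: fock_norm_def integral_fock_kernel_square)
qed

text \<open>After translating by \<open>v\<close> the integrand becomes a holomorphic function times the
  weight, so the mean value property applies.\<close>
lemma fock_inner_kernel:
  assumes f: "f \<in> fock_space"
  shows "fock_inner f (fock_kernel v) = f v"
proof -
  have [measurable]: "f \<in> borel_measurable borel" by (rule fock_space_borel_measurable[OF f])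
  define G where "G = (\<lambda>z. f z * cnj (fock_kernel v z) * fock_weight z)"
  have [measurable]: "G \<in> borel_measurable borel" unfolding G_def fock_kernel_def by measurable
  define h where "h = (\<lambda>u. f (v + u) * exp (- cnj v * u))"
  have hol: "h holomorphic_on UNIV"
    unfolding h_def
    by (intro holomorphic_intros holomorphic_on_compose_gen[OF _ fock_space_holomorphic[OF f], unfolded o_def]) auto
  have G_translate: "G (v + u) = h u * fock_weight u" for u
  proof -
    have "v * cnj (v + u) - complex_of_real ((cmod (v + u))\<^sup>2) = - cnj v * u - complex_of_real ((cmod u)\<^sup>2)"
      by (simp only: complex_norm_square) (simp add: algebra_simps)
    then have "exp (v * cnj (v + u)) * exp (- complex_of_real ((cmod (v + u))\<^sup>2))
        = exp (- cnj v * u) * exp (- complex_of_real ((cmod u)\<^sup>2))"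
      by (simp flip: exp_add)
    then show ?thesis
      by (simp add: G_def h_def fock_kernel_def fock_weight_eq_exp exp_cnj)
  qed
  have "integrable lborel G"
    unfolding G_def
    by (intro integrable_fock_inner_integrand fock_space_square_integrable f fock_kernel_in_fock_space)
  then have int: "integrable lborel (\<lambda>u. h u * fock_weight u)"
    by (simp add: lborel_integrable_translate_iff[of G v, symmetric] G_translate)
  have "fock_inner f (fock_kernel v) = (\<integral>z. G z \<partial>lborel)"
    by (simp add: fock_inner_def G_def)
  also have "\<dots> = (\<integral>u. G (v + u) \<partial>lborel)"
    by (rule lborel_integral_translate[symmetric]) simp
  also have "\<dots> = h 0"
    unfolding G_translate by (rule integral_holomorphic_fock_weight[OF hol int])
  finally show ?thesis by (simp add: h_def)
qed

lemma fock_integral_reproducing: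
  "f \<in> fock_space \<Longrightarrow> f v = (\<integral>u. f u * exp (v * cnj u) * fock_weight u \<partial>lborel)"
  using fock_inner_kernel[of f v] by (simp add: fock_inner_def fock_kernel_def exp_cnj)

lemma fock_point_bound:
  assumes f: "f \<in> fock_space"
  shows "cmod (f v) \<le> fock_norm f * exp ((cmod v)\<^sup>2 / 2)"
  using fock_inner_Cauchy_Schwarz[OF fock_space_square_integrable[OF f]
      fock_space_square_integrable[OF fock_kernel_in_fock_space], of v]
  by (simp add: fock_inner_kernel[OF f] fock_norm_kernel)

lemma fock_eqI:
  assumes "f \<in> fock_space" "g \<in> fock_space"
    and "\<And>h. h \<in> fock_space \<Longrightarrow> fock_inner h f = fock_inner h g"
  shows "f = g"
proof
  fix z
  have "fock_inner (fock_kernel z) f = fock_inner (fock_kernel z) g"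
    by (rule assms(3)[OF fock_kernel_in_fock_space])
  then show "f z = g z"
    by (simp add: fock_inner_commute[of "fock_kernel z"] fock_inner_kernel assms(1,2))
qed

section \<open>Composition with affine maps\<close>

lemma affine_norm_power2_le:
  fixes \<alpha> \<beta> z :: complex
  assumes "cmod \<alpha> \<le> \<rho>" "\<rho> < 1" "cmod \<beta> \<le> B"
  defines "d \<equiv> (1 - \<rho>\<^sup>2) / 2"
  shows "(cmod (\<alpha> * z + \<beta>))\<^sup>2 - (cmod z)\<^sup>2 \<le> - d * (cmod z)\<^sup>2 + B\<^sup>2 * (1 + \<rho>\<^sup>2 / d)"
proof -
  define r where "r = cmod z"
  have \<rho>0: "\<rho> \<ge> 0" using assms(1) norm_ge_zero[of \<alpha>] by linarith
  have B0: "B \<ge> 0" using assms(3) norm_ge_zero[of \<beta>] by linarith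
  have r0: "r \<ge> 0" by (simp add: r_def)
  have d0: "d > 0"
    using \<rho>0 assms(2) by (simp add: d_def power_less_one_iff abs_square_less_1)
  have "cmod (\<alpha> * z + \<beta>) \<le> cmod \<alpha> * r + cmod \<beta>"
    using norm_triangle_ineq[of "\<alpha> * z" \<beta>] by (simp add: r_def norm_mult)
  also have "\<dots> \<le> \<rho> * r + B"
    using assms(1,3) r0 by (intro add_mono mult_right_mono) auto
  finally have "(cmod (\<alpha> * z + \<beta>))\<^sup>2 \<le> (\<rho> * r + B)\<^sup>2"
    by (simp add: power_mono)
  moreover have "2 * \<rho> * B * r \<le> d * r\<^sup>2 + \<rho>\<^sup>2 * B\<^sup>2 / d"
  proof -
    have "2 * \<rho> * B * r * d \<le> d * r\<^sup>2 * d + \<rho>\<^sup>2 * B\<^sup>2"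
      using sum_squares_bound[of "d * r" "\<rho> * B"] by (simp add: power2_eq_square algebra_simps)
    then show ?thesis using d0 by (simp add: field_simps)
  qed
  ultimately have "(cmod (\<alpha> * z + \<beta>))\<^sup>2 \<le> \<rho>\<^sup>2 * r\<^sup>2 + d * r\<^sup>2 + \<rho>\<^sup>2 * B\<^sup>2 / d + B\<^sup>2"
    by (simp add: power2_sum power_mult_distrib algebra_simps)
  moreover have "\<rho>\<^sup>2 * r\<^sup>2 + d * r\<^sup>2 - r\<^sup>2 = - d * r\<^sup>2" by (simp add: d_def algebra_simps)
  ultimately show ?thesis unfolding r_def[symmetric] by (simp add: algebra_simps)
qed

text \<open>The point evaluation bound \<open>|f w|\<^sup>2 \<le> \<parallel>f\<parallel>\<^sup>2 exp |w|\<^sup>2\<close> at \<open>w = \<alpha> z + \<beta>\<close>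
  leaves a Gaussian of positive width after multiplication by the weight.\<close>
lemma fock_comp_affine_weighted_le:
  assumes f: "f \<in> fock_space" and \<alpha>: "cmod \<alpha> \<le> \<rho>" and \<rho>: "\<rho> < 1" and \<beta>: "cmod \<beta> \<le> B"
  defines "d \<equiv> (1 - \<rho>\<^sup>2) / 2"
  shows "(cmod (f (\<alpha> * z + \<beta>)))\<^sup>2 * fock_weight z
    \<le> (fock_norm f)\<^sup>2 * exp (B\<^sup>2 * (1 + \<rho>\<^sup>2 / d)) / pi * exp (- d * (cmod z)\<^sup>2)"
proof -
  have "(cmod (f (\<alpha> * z + \<beta>)))\<^sup>2 \<le> (fock_norm f * exp ((cmod (\<alpha> * z + \<beta>))\<^sup>2 / 2))\<^sup>2"
    by (intro power_mono fock_point_bound[OF f]) simp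
  also have "\<dots> = (fock_norm f)\<^sup>2 * exp ((cmod (\<alpha> * z + \<beta>))\<^sup>2)"
    by (simp add: power_mult_distrib power2_eq_square flip: exp_add)
  finally have "(cmod (f (\<alpha> * z + \<beta>)))\<^sup>2 * fock_weight z
      \<le> (fock_norm f)\<^sup>2 / pi * exp ((cmod (\<alpha> * z + \<beta>))\<^sup>2 - (cmod z)\<^sup>2)"
    by (simp add: fock_weight_def exp_diff exp_minus field_simps mult_right_mono)
  also have "\<dots> \<le> (fock_norm f)\<^sup>2 / pi * exp (- d * (cmod z)\<^sup>2 + B\<^sup>2 * (1 + \<rho>\<^sup>2 / d))"
    using affine_norm_power2_le[OF \<alpha> \<rho> \<beta>, of z] unfolding d_def by (intro mult_left_mono) auto
  also have "exp (- d * (cmod z)\<^sup>2 + B\<^sup>2 * (1 + \<rho>\<^sup>2 / d))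
      = exp (B\<^sup>2 * (1 + \<rho>\<^sup>2 / d)) * exp (- d * (cmod z)\<^sup>2)"
    by (simp only: exp_add mult.commute)
  finally show ?thesis by simp
qed

lemma fock_comp_affine_uniform_bound:
  assumes "\<rho> < 1"
  obtains K where "\<And>\<alpha> \<beta> f. cmod \<alpha> \<le> \<rho> \<Longrightarrow> cmod \<beta> \<le> B \<Longrightarrow> f \<in> fock_space \<Longrightarrow>
    (\<lambda>z. f (\<alpha> * z + \<beta>)) \<in> fock_space \<and> fock_norm (\<lambda>z. f (\<alpha> * z + \<beta>)) \<le> K * fock_norm f"
proof -
  define d where "d = (1 - \<rho>\<^sup>2) / 2"
  define C where "C = B\<^sup>2 * (1 + \<rho>\<^sup>2 / d)"
  have "(\<lambda>z. f (\<alpha> * z + \<beta>)) \<in> fock_space \<and> fock_norm (\<lambda>z. f (\<alpha> * z + \<beta>)) \<le> sqrt (exp C / d) * fock_norm f"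
    if \<alpha>: "cmod \<alpha> \<le> \<rho>" and \<beta>: "cmod \<beta> \<le> B" and f: "f \<in> fock_space" for \<alpha> \<beta> f
  proof
    have [measurable]: "f \<in> borel_measurable borel" by (rule fock_space_borel_measurable[OF f])
    have "0 \<le> \<rho>" using \<alpha> norm_ge_zero[of \<alpha>] by linarith
    then have d0: "d > 0"
      using assms by (simp add: d_def power_less_one_iff abs_square_less_1)
    define R where "R = (\<lambda>z. (fock_norm f)\<^sup>2 * exp C / pi * exp (- d * (cmod z)\<^sup>2))"
    have R: "integrable lborel R" "(\<integral>z. R z \<partial>lborel) = (fock_norm f)\<^sup>2 * (exp C / d)"
      unfolding R_def using integrable_gaussian_complex[OF d0] integral_gaussian_complex[OF d0] by simp_all
    have le_R: "(cmod (f (\<alpha> * z + \<beta>)))\<^sup>2 * fock_weight z \<le> R z" for z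
      unfolding R_def C_def d_def by (rule fock_comp_affine_weighted_le[OF f \<alpha> assms \<beta>])
    have int: "integrable lborel (\<lambda>z. (cmod (f (\<alpha> * z + \<beta>)))\<^sup>2 * fock_weight z)"
      by (rule Bochner_Integration.integrable_bound[OF R(1)]) (use le_R in \<open>auto intro!: AE_I2 simp: R_def\<close>)
    have "(\<lambda>z. f (\<alpha> * z + \<beta>)) holomorphic_on UNIV"
      by (intro holomorphic_on_compose_gen[OF _ fock_space_holomorphic[OF f], unfolded o_def] holomorphic_intros) auto
    then show "(\<lambda>z. f (\<alpha> * z + \<beta>)) \<in> fock_space" using int by (rule fock_spaceI)
    have "(fock_norm (\<lambda>z. f (\<alpha> * z + \<beta>)))\<^sup>2 = (\<integral>z. (cmod (f (\<alpha> * z + \<beta>)))\<^sup>2 * fock_weight z \<partial>lborel)"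
      by (rule fock_norm_power2)
    also have "\<dots> \<le> (\<integral>z. R z \<partial>lborel)"
      by (rule integral_mono[OF int R(1) le_R])
    also have "\<dots> = (sqrt (exp C / d) * fock_norm f)\<^sup>2"
      using d0 by (simp add: R(2) power_mult_distrib)
    finally show "fock_norm (\<lambda>z. f (\<alpha> * z + \<beta>)) \<le> sqrt (exp C / d) * fock_norm f"
      by (rule power2_le_imp_le) (use d0 in \<open>simp add: fock_norm_nonneg\<close>)
  qed
  then show ?thesis by (rule that)
qed

lemma fock_space_comp_affine:
  assumes f: "f \<in> fock_space" and \<alpha>: "cmod \<alpha> < 1"
  shows "(\<lambda>z. f (\<alpha> * z + \<beta>)) \<in> fock_space"
proof -
  obtain K where "\<And>\<alpha>' \<beta>' h. cmod \<alpha>' \<le> cmod \<alpha> \<Longrightarrow> cmod \<beta>' \<le> cmod \<beta> \<Longrightarrow> h \<in> fock_space \<Longrightarrow>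
      (\<lambda>z. h (\<alpha>' * z + \<beta>')) \<in> fock_space \<and> fock_norm (\<lambda>z. h (\<alpha>' * z + \<beta>')) \<le> K * fock_norm h"
    using fock_comp_affine_uniform_bound[OF \<alpha>] by blast
  then show ?thesis using f by blast
qed

lemma fock_space_comp_rotation:
  assumes f: "f \<in> fock_space" and u: "cmod u = 1"
  shows "(\<lambda>z. f (u * z)) \<in> fock_space" and "fock_norm (\<lambda>z. f (u * z)) = fock_norm f"
proof -
  have [measurable]: "f \<in> borel_measurable borel" by (rule fock_space_borel_measurable[OF f])
  define G where "G = (\<lambda>z. (cmod (f z))\<^sup>2 * fock_weight z)"
  have [measurable]: "G \<in> borel_measurable borel" unfolding G_def by measurable
  have G_rotate: "G (u * z) = (cmod (f (u * z)))\<^sup>2 * fock_weight z" for z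
    by (simp add: G_def fock_weight_rotate[OF u])
  have "integrable lborel G" using f by (simp add: fock_space_def G_def)
  then have "integrable lborel (\<lambda>z. (cmod (f (u * z)))\<^sup>2 * fock_weight z)"
    using lborel_integrable_rotate_iff[OF u, of G] by (simp add: G_rotate)
  moreover have "(\<lambda>z. f (u * z)) holomorphic_on UNIV"
    by (intro holomorphic_on_compose_gen[OF _ fock_space_holomorphic[OF f], unfolded o_def] holomorphic_intros) auto
  ultimately show "(\<lambda>z. f (u * z)) \<in> fock_space" by (intro fock_spaceI)
  show "fock_norm (\<lambda>z. f (u * z)) = fock_norm f"
    using lborel_integral_rotate[OF u, of G] by (simp add: fock_norm_def G_def fock_weight_rotate[OF u])
qed

lemma fock_inner_comp_rotation:
  assumes f: "f \<in> fock_space" and g: "g \<in> fock_space" and u: "cmod u = 1"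
  shows "fock_inner (\<lambda>z. f (u * z)) g = fock_inner f (\<lambda>z. g (cnj u * z))"
proof -
  have [measurable]: "f \<in> borel_measurable borel" "g \<in> borel_measurable borel"
    by (simp_all add: fock_space_borel_measurable f g)
  define F where "F = (\<lambda>z. f z * cnj (g (cnj u * z)) * fock_weight z)"
  have [measurable]: "F \<in> borel_measurable borel" unfolding F_def by measurable
  have "cnj u * u = 1"
    using complex_norm_square[of u] u by (simp add: mult.commute)
  then have F_rotate: "F (u * z) = f (u * z) * cnj (g z) * fock_weight z" for z
    by (simp add: F_def fock_weight_rotate[OF u] mult.assoc[symmetric])
  have "(\<integral>z. F (u * z) \<partial>lborel) = (\<integral>z. F z \<partial>lborel)"
    by (rule lborel_integral_rotate[OF u]) simp
  then show ?thesis
    unfolding F_rotate by (simp add: fock_inner_def F_def)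
qed

lemma integrable_fock_kernel_dilation:
  assumes f: "f \<in> fock_space" and g: "g \<in> fock_space" and a: "cmod a < 1"
  shows "integrable (lborel \<Otimes>\<^sub>M lborel)
    (\<lambda>(u, z). f u * exp (a * z * cnj u) * fock_weight u * (cnj (g z) * fock_weight z))"
proof -
  have [measurable]: "f \<in> borel_measurable borel" "g \<in> borel_measurable borel"
    by (simp_all add: fock_space_borel_measurable f g)
  define E where "E = (\<lambda>u::complex. complex_of_real (exp (cmod a * (cmod u)\<^sup>2 / 2)))"
  have "(cmod (E u))\<^sup>2 * fock_weight u = exp (- (1 - cmod a) * (cmod u)\<^sup>2) / pi" for u
    by (simp add: E_def fock_weight_def power2_eq_square algebra_simps flip: exp_add)
  then have E: "fock_square_integrable E"
    using integrable_gaussian_complex[of "1 - cmod a"] a by (simp add: fock_square_integrable_def E_def)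
  have exp_le: "cmod (exp (a * z * cnj u)) \<le> cmod (E u) * cmod (E z)" for u z
  proof -
    have "Re (a * z * cnj u) \<le> cmod a * (cmod z * cmod u)"
      using complex_Re_le_cmod[of "a * z * cnj u"] by (simp add: norm_mult)
    also have "\<dots> \<le> cmod a * (((cmod u)\<^sup>2 + (cmod z)\<^sup>2) / 2)"
      using sum_squares_bound[of "cmod u" "cmod z"] by (intro mult_left_mono) (auto simp: algebra_simps)
    finally show ?thesis
      by (simp add: E_def algebra_simps add_divide_distrib flip: exp_add)
  qed
  have "norm (f u * exp (a * z * cnj u) * fock_weight u * (cnj (g z) * fock_weight z))
      \<le> (cmod (f u) * cmod (E u) * fock_weight u) * (cmod (g z) * cmod (E z) * fock_weight z)" for u z
  proof -
    have "norm (f u * exp (a * z * cnj u) * fock_weight u * (cnj (g z) * fock_weight z))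
        = (cmod (f u) * fock_weight u * (cmod (g z) * fock_weight z)) * cmod (exp (a * z * cnj u))"
      by (simp add: norm_mult del: norm_exp_eq_Re)
    also have "\<dots> \<le> (cmod (f u) * fock_weight u * (cmod (g z) * fock_weight z)) * (cmod (E u) * cmod (E z))"
      by (intro mult_left_mono exp_le) simp
    finally show ?thesis by (simp only: mult_ac)
  qed
  from integrable_lborel_pair_bound[OF _ integrable_fock_norm_product integrable_fock_norm_product this]
  show ?thesis
    using E f g by (simp add: fock_space_square_integrable)
qed

text \<open>Both sides are the double integral of \<open>f u K\<^sub>u(a z) cnj (g z)\<close> against the weights,
  integrated in either order using the integral form of the reproducing property.\<close>
lemma fock_inner_comp_contraction:
  assumes f: "f \<in> fock_space" and g: "g \<in> fock_space" and a: "cmod a < 1"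
  shows "fock_inner (\<lambda>z. f (a * z)) g = fock_inner f (\<lambda>z. g (cnj a * z))"
proof -
  define H where "H = (\<lambda>u z. f u * exp (a * z * cnj u) * fock_weight u * (cnj (g z) * fock_weight z))"
  have "(\<integral>z. (\<integral>u. H u z \<partial>lborel) \<partial>lborel) = (\<integral>u. (\<integral>z. H u z \<partial>lborel) \<partial>lborel)"
    using integrable_fock_kernel_dilation[OF f g a] unfolding H_def by (rule lborel_pair.Fubini_integral)
  moreover have "(\<integral>u. H u z \<partial>lborel) = f (a * z) * cnj (g z) * fock_weight z" for z
  proof -
    have "(\<integral>u. H u z \<partial>lborel) = (\<integral>u. f u * exp (a * z * cnj u) * fock_weight u \<partial>lborel)
        * (cnj (g z) * fock_weight z)"
      unfolding H_def by (rule integral_mult_left_zero)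
    also have "\<dots> = f (a * z) * (cnj (g z) * fock_weight z)"
      using fock_integral_reproducing[OF f, of "a * z"] by simp
    finally show ?thesis by (simp add: mult.assoc)
  qed
  moreover have "(\<integral>z. H u z \<partial>lborel) = f u * cnj (g (cnj a * u)) * fock_weight u" for u
  proof -
    have "(\<integral>z. H u z \<partial>lborel) = (f u * fock_weight u) *
        (\<integral>z. cnj (g z * exp (cnj a * u * cnj z) * fock_weight z) \<partial>lborel)"
      unfolding H_def
      by (subst integral_mult_right_zero[symmetric])
         (intro Bochner_Integration.integral_cong refl, simp add: exp_cnj algebra_simps)
    also have "(\<integral>z. cnj (g z * exp (cnj a * u * cnj z) * fock_weight z) \<partial>lborel) = cnj (g (cnj a * u))"
      using fock_integral_reproducing[OF g, of "cnj a * u"] by (simp only: Bochner_Integration.integral_cnj)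
    finally show ?thesis by (simp add: algebra_simps)
  qed
  ultimately show ?thesis by (simp add: fock_inner_def)
qed

text \<open>If \<open>t\<^sub>n\<^sup>2 \<le> N t\<^sub>n\<^sub>+\<^sub>1\<close>, then \<open>(t\<^sub>0 / N)\<^bsup>2\<^sup>n\<^esup> \<le> t\<^sub>n / N\<close>; boundedness of \<open>t\<close> thus forces \<open>t\<^sub>0 \<le> N\<close>.\<close>
lemma le_of_bounded_square_recurrence:
  fixes t :: "nat \<Rightarrow> real"
  assumes N: "0 \<le> N" and t: "\<And>n. 0 \<le> t n" and rec: "\<And>n. (t n)\<^sup>2 \<le> N * t (Suc n)"
    and bounded: "\<And>n. t n \<le> B"
  shows "t 0 \<le> N"
proof (rule ccontr)
  assume gt: "\<not> t 0 \<le> N"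
  show False
  proof (cases "N = 0")
    case True
    then show False using rec[of 0] gt by simp
  next
    case False
    define q where "q n = t n / N" for n
    have q_pow: "q 0 ^ (2 ^ n) \<le> q n" for n
    proof (induction n)
      case (Suc n)
      have "q 0 ^ (2 ^ Suc n) = (q 0 ^ (2 ^ n))\<^sup>2" by (simp add: power_mult[symmetric] mult.commute)
      also have "\<dots> \<le> (q n)\<^sup>2" using Suc.IH t N by (intro power_mono) (auto simp: q_def)
      also have "\<dots> \<le> q (Suc n)"
        using rec[of n] N False by (simp add: q_def power_divide power2_eq_square divide_right_mono field_simps)
      finally show ?case .
    qed simp
    have q1: "q 0 > 1" using gt N False by (simp add: q_def)
    then obtain n where "B / N < q 0 ^ n" using real_arch_pow by blast
    also have "\<dots> \<le> q 0 ^ (2 ^ n)" using q1 by (intro power_increasing less_imp_le[OF less_exp]) simp_all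
    also have "\<dots> \<le> B / N" using q_pow[of n] divide_right_mono[OF bounded[of n] N] by (simp add: q_def)
    finally show False by simp
  qed
qed

lemma fock_norm_comp_contraction_power2_le:
  assumes f: "f \<in> fock_space" and a: "cmod a < 1"
  shows "(fock_norm (\<lambda>z. f (a * z)))\<^sup>2 \<le> fock_norm f * fock_norm (\<lambda>z. f (complex_of_real ((cmod a)\<^sup>2) * z))"
proof -
  let ?g = "\<lambda>z. f (complex_of_real ((cmod a)\<^sup>2) * z)"
  have "(cmod a)\<^sup>2 < 1" using a by (simp add: power_less_one_iff abs_square_less_1)
  then have g: "?g \<in> fock_space"
    using fock_space_comp_affine[OF f, of "complex_of_real ((cmod a)\<^sup>2)" 0] by (simp del: of_real_power)
  have fa: "(\<lambda>z. f (a * z)) \<in> fock_space"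
    using fock_space_comp_affine[OF f a, of 0] by simp
  have "(\<lambda>z. f (a * (cnj a * z))) = ?g"
    by (simp add: mult.assoc[symmetric] complex_norm_square del: of_real_power)
  then have "complex_of_real ((fock_norm (\<lambda>z. f (a * z)))\<^sup>2) = fock_inner f ?g"
    using fock_inner_self[of "\<lambda>z. f (a * z)"] fock_inner_comp_contraction[OF f fa a] by simp
  then have "(fock_norm (\<lambda>z. f (a * z)))\<^sup>2 = cmod (fock_inner f ?g)"
    by (metis abs_power2 norm_of_real)
  also have "\<dots> \<le> fock_norm f * fock_norm ?g"
    by (rule fock_inner_Cauchy_Schwarz[OF fock_space_square_integrable[OF f] fock_space_square_integrable[OF g]])
  finally show ?thesis .
qed

lemma fock_norm_comp_real_contraction_le:
  assumes f: "f \<in> fock_space" and r: "0 \<le> r" "r < 1"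
  shows "fock_norm (\<lambda>z. f (complex_of_real r * z)) \<le> fock_norm f"
proof -
  define t where "t n = fock_norm (\<lambda>z. f (complex_of_real (r ^ (2 ^ n)) * z))" for n
  obtain K where K: "\<And>\<alpha> \<beta> h. cmod \<alpha> \<le> r \<Longrightarrow> cmod \<beta> \<le> 0 \<Longrightarrow> h \<in> fock_space \<Longrightarrow>
      (\<lambda>z. h (\<alpha> * z + \<beta>)) \<in> fock_space \<and> fock_norm (\<lambda>z. h (\<alpha> * z + \<beta>)) \<le> K * fock_norm h"
    using fock_comp_affine_uniform_bound[OF r(2)] by blast
  have r_pow: "0 \<le> r ^ (2 ^ n)" "r ^ (2 ^ n) \<le> r" for n :: nat
    using r power_decreasing[of 1 "2 ^ n" r] by simp_all
  have "t 0 \<le> fock_norm f"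
  proof (rule le_of_bounded_square_recurrence)
    fix n
    show "(t n)\<^sup>2 \<le> fock_norm f * t (Suc n)"
      using fock_norm_comp_contraction_power2_le[OF f, of "complex_of_real (r ^ (2 ^ n))"] r_pow[of n] r
      by (simp add: t_def power_mult[symmetric] mult.commute del: of_real_power)
    show "t n \<le> K * fock_norm f"
      using K[OF _ _ f, of "complex_of_real (r ^ (2 ^ n))" 0] r_pow[of n] by (simp add: t_def del: of_real_power)
  qed (simp_all add: t_def fock_norm_nonneg)
  then show ?thesis by (simp add: t_def)
qed

lemma fock_norm_comp_contraction_le:
  assumes f: "f \<in> fock_space" and a: "cmod a < 1"
  shows "fock_norm (\<lambda>z. f (a * z)) \<le> fock_norm f"
proof -
  have "(cmod a)\<^sup>2 < 1" using a by (simp add: power_less_one_iff abs_square_less_1)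
  then have "fock_norm (\<lambda>z. f ((cmod a)\<^sup>2 * z)) \<le> fock_norm f"
    using fock_norm_comp_real_contraction_le[OF f, of "(cmod a)\<^sup>2"] by simp
  then have "fock_norm f * fock_norm (\<lambda>z. f ((cmod a)\<^sup>2 * z)) \<le> fock_norm f * fock_norm f"
    by (rule mult_left_mono[OF _ fock_norm_nonneg])
  then have "(fock_norm (\<lambda>z. f (a * z)))\<^sup>2 \<le> (fock_norm f)\<^sup>2"
    using fock_norm_comp_contraction_power2_le[OF f a] by (simp add: power2_eq_square)
  then show ?thesis using fock_norm_nonneg[of f] by (rule power2_le_imp_le)
qed

lemma fock_space_comp_dilation:
  assumes f: "f \<in> fock_space" and a: "cmod a \<le> 1"
  shows "(\<lambda>z. f (a * z)) \<in> fock_space"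
proof (cases "cmod a = 1")
  case True then show ?thesis by (rule fock_space_comp_rotation(1)[OF f])
next
  case False
  then show ?thesis using fock_space_comp_affine[OF f, of a 0] a by simp
qed

lemma fock_norm_comp_dilation_le:
  assumes f: "f \<in> fock_space" and a: "cmod a \<le> 1"
  shows "fock_norm (\<lambda>z. f (a * z)) \<le> fock_norm f"
  using a fock_space_comp_rotation(2)[OF f] fock_norm_comp_contraction_le[OF f]
  by (cases "cmod a = 1") auto

lemma fock_inner_comp_dilation:
  assumes f: "f \<in> fock_space" and g: "g \<in> fock_space" and a: "cmod a \<le> 1"
  shows "fock_inner (\<lambda>z. f (a * z)) g = fock_inner f (\<lambda>z. g (cnj a * z))"
  using a fock_inner_comp_rotation[OF f g] fock_inner_comp_contraction[OF f g]
  by (cases "cmod a = 1") auto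

section \<open>Absolutely convergent series in the Fock space\<close>

lemma power2_suminf_le_weighted:
  fixes a x :: "nat \<Rightarrow> real"
  assumes a: "\<And>n. a n \<ge> 0" "summable a"
    and sum_ax2: "summable (\<lambda>n. a n * (x n)\<^sup>2)" and sum_ax: "summable (\<lambda>n. a n * x n)"
  shows "(\<Sum>n. a n * x n)\<^sup>2 \<le> (\<Sum>n. a n) * (\<Sum>n. a n * (x n)\<^sup>2)"
proof (rule LIMSEQ_le_const2)
  show "(\<lambda>N. (\<Sum>n<N. a n * x n)\<^sup>2) \<longlonglongrightarrow> (\<Sum>n. a n * x n)\<^sup>2"
    by (intro tendsto_power summable_LIMSEQ sum_ax)
  show "\<exists>N. \<forall>n\<ge>N. (\<Sum>i<n. a i * x i)\<^sup>2 \<le> (\<Sum>n. a n) * (\<Sum>n. a n * (x n)\<^sup>2)"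
  proof (intro exI allI impI)
    fix N :: nat
    have "(\<Sum>i<N. a i * x i)\<^sup>2 = (\<Sum>i<N. sqrt (a i) * (sqrt (a i) * x i))\<^sup>2"
      using a by (simp add: mult.assoc[symmetric])
    also have "\<dots> \<le> (\<Sum>i<N. (sqrt (a i))\<^sup>2) * (\<Sum>i<N. (sqrt (a i) * x i)\<^sup>2)"
      by (rule Cauchy_Schwarz_ineq_sum)
    also have "\<dots> = (\<Sum>i<N. a i) * (\<Sum>i<N. a i * (x i)\<^sup>2)"
      using a by (simp add: power_mult_distrib)
    also have "\<dots> \<le> (\<Sum>n. a n) * (\<Sum>n. a n * (x n)\<^sup>2)"
      using a sum_ax2
      by (intro mult_mono sum_le_suminf suminf_nonneg sum_nonneg) auto
    finally show "(\<Sum>i<N. a i * x i)\<^sup>2 \<le> (\<Sum>n. a n) * (\<Sum>n. a n * (x n)\<^sup>2)" .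
  qed
qed

context
  fixes g :: "nat \<Rightarrow> complex \<Rightarrow> complex" and c :: "nat \<Rightarrow> complex" and M :: real
  assumes g: "\<And>n. g n \<in> fock_space" and M: "\<And>n. fock_norm (g n) \<le> M"
    and c: "summable (\<lambda>n. cmod (c n))"
begin

lemma fock_series_norm_le: "cmod (c n * g n z) \<le> cmod (c n) * (M * exp ((cmod z)\<^sup>2 / 2))"
  using fock_point_bound[OF g, of n z] M[of n]
  by (simp add: norm_mult mult_left_mono order_trans[OF _ mult_right_mono])

lemma summable_fock_series: "summable (\<lambda>n. cmod (c n * g n z))"
  by (rule summable_comparison_test'[OF summable_mult2[OF c, of "M * exp ((cmod z)\<^sup>2 / 2)"]])
     (simp add: fock_series_norm_le)

lemma holomorphic_fock_series: "(\<lambda>z. \<Sum>n. c n * g n z) holomorphic_on UNIV"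
proof -
  have "\<exists>G G'. \<forall>x \<in> UNIV. ((\<lambda>n. c n * g n x) sums G x) \<and> ((\<lambda>n. deriv (\<lambda>z. c n * g n z) x) sums G' x)
      \<and> (G has_field_derivative G' x) (at x)"
  proof (rule series_and_derivative_comparison_local)
    have "(\<lambda>z. c n * g n z) holomorphic_on UNIV" for n
      using fock_space_holomorphic[OF g] by (intro holomorphic_intros)
    then show "\<And>n x. x \<in> UNIV \<Longrightarrow> ((\<lambda>z. c n * g n z) has_field_derivative deriv (\<lambda>z. c n * g n z) x) (at x)"
      by (rule holomorphic_derivI) auto
    fix x :: complex
    have "norm (c n * g n y) \<le> cmod (c n) * (M * exp ((cmod x + 1)\<^sup>2 / 2))" if "y \<in> ball x 1" for n y
    proof -
      have "0 \<le> M" using M[of 0] fock_norm_nonneg[of "g 0"] by linarith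
      moreover have "cmod y \<le> cmod x + 1"
        using that norm_triangle_ineq2[of y x] by (auto simp: dist_norm norm_minus_commute)
      ultimately have "M * exp ((cmod y)\<^sup>2 / 2) \<le> M * exp ((cmod x + 1)\<^sup>2 / 2)"
        by (intro mult_left_mono) (simp_all add: power_mono)
      then show ?thesis
        by (rule order_trans[OF fock_series_norm_le mult_left_mono]) simp
    qed
    then show "\<exists>d h. 0 < d \<and> summable h \<and> (\<forall>\<^sub>F n in sequentially. \<forall>y\<in>ball x d \<inter> UNIV. norm (c n * g n y) \<le> h n)"
      using summable_mult2[OF c]
      by (intro exI[of _ 1] exI[of _ "\<lambda>n. cmod (c n) * (M * exp ((cmod x + 1)\<^sup>2 / 2))"] conjI always_eventually)
         auto
  qed simp
  then obtain G where G: "\<And>x. (\<lambda>n. c n * g n x) sums G x" "\<And>x. G field_differentiable at x"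
    unfolding field_differentiable_def by blast
  then have "(\<lambda>z. \<Sum>n. c n * g n z) = G" by (auto simp: sums_iff fun_eq_iff)
  then show ?thesis using G(2) by (simp add: holomorphic_on_def field_differentiable_at_within)
qed

lemma summable_fock_series_power2: "summable (\<lambda>n. cmod (c n) * (cmod (g n z))\<^sup>2)"
proof -
  have "(cmod (g n z))\<^sup>2 \<le> (M * exp ((cmod z)\<^sup>2 / 2))\<^sup>2" for n
    using fock_point_bound[OF g, of n z] M[of n] by (intro power_mono) (auto intro: order_trans mult_right_mono)
  then show ?thesis
    by (intro summable_comparison_test'[OF summable_mult2[OF c, of "(M * exp ((cmod z)\<^sup>2 / 2))\<^sup>2"]])
       (simp add: mult_left_mono)
qed

lemma fock_series_power2_le:
  "(cmod (\<Sum>n. c n * g n z))\<^sup>2 \<le> (\<Sum>n. cmod (c n)) * (\<Sum>n. cmod (c n) * (cmod (g n z))\<^sup>2)"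
proof -
  have "cmod (\<Sum>n. c n * g n z) \<le> (\<Sum>n. cmod (c n) * cmod (g n z))"
    using summable_norm[OF summable_fock_series[of z]] by (simp add: norm_mult)
  then show ?thesis
    using summable_fock_series[of z] summable_fock_series_power2[of z] c
    by (intro order_trans[OF power_mono power2_suminf_le_weighted]) (auto simp: norm_mult)
qed

lemma
  shows integrable_fock_series_weighted:
    "integrable lborel (\<lambda>z. \<Sum>n. cmod (c n) * ((cmod (g n z))\<^sup>2 * fock_weight z))"
  and integral_fock_series_weighted_le:
    "(\<integral>z. (\<Sum>n. cmod (c n) * ((cmod (g n z))\<^sup>2 * fock_weight z)) \<partial>lborel) \<le> (\<Sum>n. cmod (c n)) * M\<^sup>2"
proof -
  define F where "F n z = cmod (c n) * ((cmod (g n z))\<^sup>2 * fock_weight z)" for n z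
  have int_F: "integrable lborel (F n)" and integral_F: "(\<integral>z. F n z \<partial>lborel) \<le> cmod (c n) * M\<^sup>2" for n
  proof -
    show "integrable lborel (F n)" using g[of n] by (simp add: F_def[abs_def] fock_space_def)
    have "(fock_norm (g n))\<^sup>2 \<le> M\<^sup>2" using M[of n] fock_norm_nonneg by (intro power_mono)
    then show "(\<integral>z. F n z \<partial>lborel) \<le> cmod (c n) * M\<^sup>2"
      by (simp add: F_def fock_norm_power2 mult_left_mono)
  qed
  have "summable (\<lambda>n. F n z)" for z
    using summable_mult2[OF summable_fock_series_power2[of z], of "fock_weight z"] by (simp add: F_def mult.assoc)
  then have AE: "AE z in lborel. summable (\<lambda>n. norm (F n z))"
    by (intro AE_I2) (simp add: F_def)
  have summable_int: "summable (\<lambda>n. \<integral>z. norm (F n z) \<partial>lborel)"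
    by (rule summable_comparison_test'[OF summable_mult2[OF c, of "M\<^sup>2"]])
       (use integral_F in \<open>auto simp: F_def intro!: integral_nonneg_AE\<close>)
  have "(\<Sum>n. \<integral>z. F n z \<partial>lborel) \<le> (\<Sum>n. cmod (c n)) * M\<^sup>2"
    using suminf_le[OF integral_F summable_integral[OF int_F AE summable_int] summable_mult2[OF c]]
    by (simp add: suminf_mult2[OF c])
  then show "integrable lborel (\<lambda>z. \<Sum>n. cmod (c n) * ((cmod (g n z))\<^sup>2 * fock_weight z))"
    and "(\<integral>z. (\<Sum>n. cmod (c n) * ((cmod (g n z))\<^sup>2 * fock_weight z)) \<partial>lborel) \<le> (\<Sum>n. cmod (c n)) * M\<^sup>2"
    using integrable_suminf[OF int_F AE summable_int] integral_suminf[OF int_F AE summable_int]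
    by (simp_all add: F_def)
qed

text \<open>By Cauchy-Schwarz for series, \<open>|\<Sum> c\<^sub>n g\<^sub>n|\<^sup>2 \<le> A \<Sum> |c\<^sub>n| |g\<^sub>n|\<^sup>2\<close> with \<open>A = \<Sum> |c\<^sub>n|\<close>; integrate termwise.\<close>
lemma fock_space_series:
  shows "(\<lambda>z. \<Sum>n. c n * g n z) \<in> fock_space"
    and "fock_norm (\<lambda>z. \<Sum>n. c n * g n z) \<le> M * (\<Sum>n. cmod (c n))"
proof -
  define A where "A = (\<Sum>n. cmod (c n))"
  define h where "h = (\<lambda>z. \<Sum>n. c n * g n z)"
  define G where "G z = (\<Sum>n. cmod (c n) * ((cmod (g n z))\<^sup>2 * fock_weight z))" for z
  have A0: "0 \<le> A" unfolding A_def using c by (intro suminf_nonneg) auto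
  have M0: "0 \<le> M" using M[of 0] fock_norm_nonneg[of "g 0"] by linarith
  have [measurable]: "h \<in> borel_measurable borel"
    unfolding h_def by (rule borel_measurable_holomorphic[OF holomorphic_fock_series])
  have h_le: "(cmod (h z))\<^sup>2 * fock_weight z \<le> A * G z" for z
  proof -
    have "(cmod (h z))\<^sup>2 * fock_weight z \<le> A * (\<Sum>n. cmod (c n) * (cmod (g n z))\<^sup>2) * fock_weight z"
      unfolding h_def A_def by (intro mult_right_mono fock_series_power2_le) simp
    also have "\<dots> = A * G z"
      using suminf_mult2[OF summable_fock_series_power2[of z], of "fock_weight z"] by (simp add: G_def mult.assoc)
    finally show ?thesis .
  qed
  have G0: "0 \<le> G z" for z
    unfolding G_def using summable_mult2[OF summable_fock_series_power2[of z], of "fock_weight z"]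
    by (intro suminf_nonneg) (simp_all add: mult.assoc)
  have int_h: "integrable lborel (\<lambda>z. (cmod (h z))\<^sup>2 * fock_weight z)"
  proof (rule Bochner_Integration.integrable_bound)
    show "integrable lborel (\<lambda>z. A * G z)"
      using integrable_fock_series_weighted by (simp add: G_def)
    show "AE z in lborel. norm ((cmod (h z))\<^sup>2 * fock_weight z) \<le> norm (A * G z)"
      using h_le A0 G0 by (intro AE_I2) simp
  qed simp
  then show "(\<lambda>z. \<Sum>n. c n * g n z) \<in> fock_space"
    unfolding h_def by (rule fock_spaceI[OF holomorphic_fock_series])
  have "(fock_norm h)\<^sup>2 \<le> (\<integral>z. A * G z \<partial>lborel)"
    unfolding fock_norm_power2
    using integral_mono[OF int_h _ h_le] integrable_fock_series_weighted by (simp add: G_def)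
  also have "\<dots> \<le> A * (A * M\<^sup>2)"
    using integral_fock_series_weighted_le A0 by (simp add: G_def A_def mult_left_mono)
  also have "\<dots> = (M * A)\<^sup>2" by (simp add: power2_eq_square)
  finally show "fock_norm (\<lambda>z. \<Sum>n. c n * g n z) \<le> M * (\<Sum>n. cmod (c n))"
    unfolding h_def A_def by (rule power2_le_imp_le) (use M0 A0 in \<open>simp add: A_def\<close>)
qed

end

section \<open>Spectral radius of power bounded composition operators\<close>

definition comp_power_bounded :: "(complex \<Rightarrow> complex) \<Rightarrow> real \<Rightarrow> bool" where
  "comp_power_bounded \<psi> M \<longleftrightarrow> (\<forall>n. \<forall>f\<in>fock_space.
     (\<lambda>z. f ((\<psi> ^^ n) z)) \<in> fock_space \<and> fock_norm (\<lambda>z. f ((\<psi> ^^ n) z)) \<le> M * fock_norm f)"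

text \<open>The Neumann series \<open>(C\<^sub>\<psi> - c)\<^sup>-\<^sup>1 = - \<Sum>\<^sub>n c\<^sup>-\<^sup>n\<^sup>-\<^sup>1 C\<^sub>\<psi>\<^sup>n\<close> for \<open>|c| > 1\<close>.\<close>
definition comp_resolvent :: "(complex \<Rightarrow> complex) \<Rightarrow> complex \<Rightarrow> fock_op" where
  "comp_resolvent \<psi> c f = (\<lambda>z. \<Sum>n. - ((1 / c) ^ Suc n) * f ((\<psi> ^^ n) z))"

context
  fixes \<psi> :: "complex \<Rightarrow> complex" and M :: real and c :: complex
  assumes \<psi>: "comp_power_bounded \<psi> M" and c: "cmod c > 1"
begin

lemma summable_norm_inverse_powers: "summable (\<lambda>n. cmod (- ((1 / c) ^ Suc n)))"
proof -
  have "cmod (1 / c) < 1" using c by (simp add: norm_divide divide_less_eq)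
  then have "summable (\<lambda>n. cmod (1 / c) ^ n)" by (intro summable_geometric) simp
  then have "summable (\<lambda>n. cmod (1 / c) ^ Suc n)" by (simp only: summable_Suc_iff)
  then show ?thesis by (simp only: norm_minus_cancel norm_power)
qed

lemma fock_space_comp_resolvent:
  assumes f: "f \<in> fock_space"
  shows "comp_resolvent \<psi> c f \<in> fock_space"
    and "fock_norm (comp_resolvent \<psi> c f) \<le> M * fock_norm f * (\<Sum>n. cmod (- ((1 / c) ^ Suc n)))"
  using fock_space_series[of "\<lambda>n z. f ((\<psi> ^^ n) z)" "M * fock_norm f", OF _ _ summable_norm_inverse_powers]
    \<psi> f unfolding comp_power_bounded_def comp_resolvent_def by auto

lemma summable_comp_resolvent:
  assumes f: "f \<in> fock_space"
  shows "summable (\<lambda>n. - ((1 / c) ^ Suc n) * f ((\<psi> ^^ n) z))"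
  using summable_fock_series[of "\<lambda>n z. f ((\<psi> ^^ n) z)" "M * fock_norm f", OF _ _ summable_norm_inverse_powers]
    \<psi> f unfolding comp_power_bounded_def by (auto intro: summable_norm_cancel)

lemma fock_bounded_comp_resolvent: "fock_bounded (comp_resolvent \<psi> c)"
  unfolding fock_bounded_def
proof (intro conjI ballI allI)
  show "\<And>f. f \<in> fock_space \<Longrightarrow> comp_resolvent \<psi> c f \<in> fock_space"
    by (rule fock_space_comp_resolvent(1))
  show "comp_resolvent \<psi> c (\<lambda>z. f z + g z) = (\<lambda>z. comp_resolvent \<psi> c f z + comp_resolvent \<psi> c g z)"
    if "f \<in> fock_space" "g \<in> fock_space" for f g
    using suminf_add[OF summable_comp_resolvent[OF that(1)] summable_comp_resolvent[OF that(2)]]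
    by (simp add: comp_resolvent_def distrib_left)
  show "comp_resolvent \<psi> c (\<lambda>z. d * f z) = (\<lambda>z. d * comp_resolvent \<psi> c f z)"
    if "f \<in> fock_space" for f d
    using suminf_mult[OF summable_comp_resolvent[OF that], of d]
    by (simp add: comp_resolvent_def mult_ac)
  show "\<exists>K. \<forall>f\<in>fock_space. fock_norm (comp_resolvent \<psi> c f) \<le> K * fock_norm f"
    using fock_space_comp_resolvent(2) by (metis mult.commute mult.left_commute)
qed

lemma summable_comp_resolvent_terms:
  assumes f: "f \<in> fock_space"
  shows "summable (\<lambda>n. (1 / c) ^ n * f ((\<psi> ^^ n) z))"
proof -
  have "(\<lambda>n. (1 / c) ^ n * f ((\<psi> ^^ n) z)) = (\<lambda>n. - c * (- ((1 / c) ^ Suc n) * f ((\<psi> ^^ n) z)))"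
    using c by (auto simp: fun_eq_iff)
  then show ?thesis
    using summable_mult[OF summable_comp_resolvent[OF f, of z], of "- c"] by simp
qed

lemma comp_resolvent_left_inverse:
  assumes f: "f \<in> fock_space"
  shows "comp_resolvent \<psi> c (\<lambda>z. comp_op \<psi> f z - c * f z) = f"
proof
  fix z
  define b where "b n = (1 / c) ^ n * f ((\<psi> ^^ n) z)" for n
  have "b \<longlonglongrightarrow> 0"
    unfolding b_def by (rule summable_LIMSEQ_zero[OF summable_comp_resolvent_terms[OF f]])
  then have "(\<lambda>n. - (b (Suc n) - b n)) sums - (0 - b 0)"
    by (intro sums_minus telescope_sums)
  moreover have "- ((1 / c) ^ Suc n) * (comp_op \<psi> f ((\<psi> ^^ n) z) - c * f ((\<psi> ^^ n) z)) = - (b (Suc n) - b n)" for n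
    using c by (auto simp: b_def comp_op_def algebra_simps)
  ultimately show "comp_resolvent \<psi> c (\<lambda>z. comp_op \<psi> f z - c * f z) z = f z"
    by (simp add: comp_resolvent_def sums_iff b_def)
qed

lemma comp_resolvent_right_inverse:
  assumes f: "f \<in> fock_space"
  shows "(\<lambda>z. comp_op \<psi> (comp_resolvent \<psi> c f) z - c * comp_resolvent \<psi> c f z) = f"
proof
  fix z
  define b where "b n = (1 / c) ^ n * f ((\<psi> ^^ n) z)" for n
  have b: "summable b" unfolding b_def by (rule summable_comp_resolvent_terms[OF f])
  have "- ((1 / c) ^ Suc n) * f ((\<psi> ^^ n) (\<psi> z)) = - b (Suc n)" for n
    by (simp only: b_def funpow_Suc_right comp_apply mult_minus_left)
  then have "comp_op \<psi> (comp_resolvent \<psi> c f) z = (\<Sum>n. - b (Suc n))"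
    by (simp only: comp_op_def comp_resolvent_def)
  also have "\<dots> = - (\<Sum>n. b (Suc n))"
    by (rule suminf_minus) (simp add: summable_Suc_iff b)
  also have "\<dots> = - (suminf b - b 0)"
    by (simp only: suminf_split_head[OF b])
  finally have left: "comp_op \<psi> (comp_resolvent \<psi> c f) z = - (suminf b - b 0)" .
  have "c * (- ((1 / c) ^ Suc n) * f ((\<psi> ^^ n) z)) = - b n" for n
    using c by (auto simp: b_def)
  then have "c * comp_resolvent \<psi> c f z = - suminf b"
    using suminf_mult[OF summable_comp_resolvent[OF f, of z], of c] b
    by (simp add: comp_resolvent_def suminf_minus)
  then show "comp_op \<psi> (comp_resolvent \<psi> c f) z - c * comp_resolvent \<psi> c f z = f z"
    using left by (simp add: b_def)
qed

lemma not_in_fock_spectrum_comp: "c \<notin> fock_spectrum (comp_op \<psi>)"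
  using fock_bounded_comp_resolvent comp_resolvent_left_inverse comp_resolvent_right_inverse
  unfolding fock_spectrum_def fock_invertible_def by blast

end

lemma one_in_fock_spectrum_comp: "1 \<in> fock_spectrum (comp_op \<psi>)"
proof -
  have "\<not> fock_invertible (\<lambda>f z. comp_op \<psi> f z - 1 * f z)"
  proof
    assume "fock_invertible (\<lambda>f z. comp_op \<psi> f z - 1 * f z)"
    then obtain S where "\<forall>f\<in>fock_space. S (\<lambda>z. comp_op \<psi> f z - 1 * f z) = f"
      unfolding fock_invertible_def by blast
    then have "S (\<lambda>z. 0) = (\<lambda>z. 1)" "S (\<lambda>z. 0) = (\<lambda>z. 0)"
      using fock_space_const[of 1] fock_space_const[of 0] by (auto simp: comp_op_def)
    then show False by (metis zero_neq_one)
  qed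
  then show ?thesis by (simp add: fock_spectrum_def)
qed

lemma fock_spectral_radius_comp:
  assumes "comp_power_bounded \<psi> M"
  shows "fock_spectral_radius (comp_op \<psi>) = 1"
  unfolding fock_spectral_radius_def
proof (rule cSup_eq_maximum)
  show "1 \<in> cmod ` fock_spectrum (comp_op \<psi>)"
    using one_in_fock_spectrum_comp by force
  show "x \<le> 1" if "x \<in> cmod ` fock_spectrum (comp_op \<psi>)" for x
    using that not_in_fock_spectrum_comp[OF assms] by force
qed

lemma funpow_affine:
  "((\<lambda>z. a * z + b) ^^ n) z = a ^ n * z + b * (\<Sum>k<n. a ^ k :: 'a::comm_ring_1)"
proof (induction n)
  case (Suc n)
  have "(\<Sum>k<Suc n. a ^ k) = 1 + a * (\<Sum>k<n. a ^ k)"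
    by (subst sum.lessThan_Suc_shift) (simp add: sum_distrib_left)
  then show ?case using Suc.IH by (simp add: algebra_simps)
qed simp

lemma comp_power_bounded_dilation:
  assumes "cmod a \<le> 1"
  shows "comp_power_bounded (\<lambda>z. a * z) 1"
proof -
  have "((\<lambda>z. a * z) ^^ n) z = a ^ n * z" for n z
    using funpow_affine[where b = 0] by simp
  moreover have "cmod (a ^ n) \<le> 1" for n
    using assms by (simp add: norm_power power_le_one)
  ultimately show ?thesis
    by (simp add: comp_power_bounded_def fock_space_comp_dilation fock_norm_comp_dilation_le)
qed

lemma comp_power_bounded_affine:
  assumes a: "cmod a < 1"
  obtains M where "comp_power_bounded (\<lambda>z. a * z + b) M"
proof -
  obtain K where K: "\<And>\<alpha> \<beta> f. cmod \<alpha> \<le> cmod a \<Longrightarrow> cmod \<beta> \<le> cmod b / (1 - cmod a) \<Longrightarrow> f \<in> fock_space \<Longrightarrow>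
      (\<lambda>z. f (\<alpha> * z + \<beta>)) \<in> fock_space \<and> fock_norm (\<lambda>z. f (\<alpha> * z + \<beta>)) \<le> K * fock_norm f"
    using fock_comp_affine_uniform_bound[OF a] by blast
  have "(\<lambda>z. f (a ^ n * z + b * (\<Sum>k<n. a ^ k))) \<in> fock_space \<and>
      fock_norm (\<lambda>z. f (a ^ n * z + b * (\<Sum>k<n. a ^ k))) \<le> max 1 K * fock_norm f"
    if f: "f \<in> fock_space" for n f
  proof (cases n)
    case 0
    then show ?thesis using f mult_right_mono[OF max.cobounded1[of 1 K] fock_norm_nonneg[of f]] by simp
  next
    case (Suc m)
    have "cmod (a ^ n) = cmod a * cmod a ^ m" by (simp add: Suc norm_mult norm_power)
    also have "\<dots> \<le> cmod a" using a by (intro mult_left_le power_le_one) auto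
    finally have an: "cmod (a ^ n) \<le> cmod a" .
    have "cmod (\<Sum>k<n. a ^ k) \<le> 1 / (1 - cmod a)"
    proof -
      have "cmod (\<Sum>k<n. a ^ k) \<le> (\<Sum>k<n. cmod a ^ k)"
        by (rule order_trans[OF norm_sum]) (simp add: norm_power)
      also have "\<dots> \<le> (\<Sum>k. cmod a ^ k)"
        using a by (intro sum_le_suminf summable_geometric) auto
      finally show ?thesis using suminf_geometric[of "cmod a"] a by simp
    qed
    then have "cmod b * cmod (\<Sum>k<n. a ^ k) \<le> cmod b * (1 / (1 - cmod a))"
      by (rule mult_left_mono) simp
    then have "cmod (b * (\<Sum>k<n. a ^ k)) \<le> cmod b / (1 - cmod a)"
      by (simp add: norm_mult)
    then show ?thesis
      using K[OF an _ f] mult_right_mono[OF max.cobounded2[of K 1] fock_norm_nonneg[of f]]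
      by (meson order_trans)
  qed
  then show ?thesis
    by (intro that[of "max 1 K"]) (simp add: comp_power_bounded_def funpow_affine)
qed

section \<open>Composition operators with affine symbols\<close>

lemma fock_opnorm_eq_1:
  assumes "\<And>f. f \<in> fock_space \<Longrightarrow> fock_norm (T f) \<le> fock_norm f" and "T (\<lambda>z. 1) = (\<lambda>z. 1)"
  shows "fock_opnorm T = 1"
  unfolding fock_opnorm_def
proof (rule cSup_eq_maximum)
  show "1 \<in> {fock_norm (T f) |f. f \<in> fock_space \<and> fock_norm f \<le> 1}"
    using assms(2) fock_space_const[of 1] fock_norm_one by force
  show "x \<le> 1" if "x \<in> {fock_norm (T f) |f. f \<in> fock_space \<and> fock_norm f \<le> 1}" for x
    using that assms(1) by force
qed

lemma fock_opnorm_gt_1: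
  assumes T: "fock_bounded T" and g: "g \<in> fock_space" and gt: "fock_norm (T g) > fock_norm g"
  shows "fock_opnorm T > 1"
proof -
  obtain K where K: "\<forall>f\<in>fock_space. fock_norm (T f) \<le> K * fock_norm f"
    using T unfolding fock_bounded_def by blast
  have g0: "fock_norm g > 0"
  proof (rule ccontr)
    assume "\<not> fock_norm g > 0"
    then have "fock_norm g = 0" using fock_norm_nonneg[of g] by simp
    then show False using K g gt by auto
  qed
  define f where "f = (\<lambda>z. complex_of_real (1 / fock_norm g) * g z)"
  have f: "f \<in> fock_space" unfolding f_def by (rule fock_space_scale[OF g])
  have "fock_norm f = 1" unfolding f_def fock_norm_scale using g0 by (simp add: norm_divide)
  have "T f = (\<lambda>z. complex_of_real (1 / fock_norm g) * T g z)"
    using T g unfolding fock_bounded_def f_def by blast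
  then have "fock_norm (T f) = fock_norm (T g) / fock_norm g"
    using g0 by (simp only: fock_norm_scale) (simp add: norm_divide)
  then have "fock_norm (T f) > 1"
    using gt g0 by simp
  moreover have "fock_norm (T f) \<le> fock_opnorm T"
    unfolding fock_opnorm_def
  proof (rule cSup_upper)
    show "fock_norm (T f) \<in> {fock_norm (T f) |f. f \<in> fock_space \<and> fock_norm f \<le> 1}"
      using f \<open>fock_norm f = 1\<close> by auto
    have "fock_norm (T h) \<le> \<bar>K\<bar>" if "h \<in> fock_space" "fock_norm h \<le> 1" for h
    proof -
      have "fock_norm (T h) \<le> K * fock_norm h" using K that(1) by blast
      also have "\<dots> \<le> \<bar>K\<bar> * fock_norm h" by (intro mult_right_mono) (auto simp: fock_norm_nonneg)
      also have "\<dots> \<le> \<bar>K\<bar>" using that(2) by (intro mult_left_le) (auto simp: fock_norm_nonneg)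
      finally show ?thesis .
    qed
    then show "bdd_above {fock_norm (T f) |f. f \<in> fock_space \<and> fock_norm f \<le> 1}"
      by (intro bdd_aboveI[of _ "\<bar>K\<bar>"]) auto
  qed
  ultimately show ?thesis by simp
qed

lemma comp_op_fock_kernel:
  "comp_op (\<lambda>z. a * z + b) (fock_kernel v) = (\<lambda>z. exp (cnj v * b) * fock_kernel (cnj a * v) z)"
  by (auto simp: comp_op_def fock_kernel_def exp_add[symmetric] algebra_simps)

lemma fock_norm_comp_op_kernel:
  "fock_norm (comp_op (\<lambda>z. a * z + b) (fock_kernel v)) = exp (Re (cnj v * b)) * exp ((cmod a * cmod v)\<^sup>2 / 2)"
  by (simp add: comp_op_fock_kernel fock_norm_scale fock_norm_kernel norm_mult)

lemma fock_adjoint_comp_op_kernel: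
  assumes S: "fock_adjoint (comp_op \<phi>) S" and maps: "\<And>g. g \<in> fock_space \<Longrightarrow> comp_op \<phi> g \<in> fock_space"
  shows "S (\<lambda>z. c * fock_kernel u z) = (\<lambda>z. c * fock_kernel (\<phi> u) z)"
proof (rule fock_eqI)
  have K: "(\<lambda>z. c * fock_kernel u z) \<in> fock_space" by (rule fock_space_scale[OF fock_kernel_in_fock_space])
  then show "S (\<lambda>z. c * fock_kernel u z) \<in> fock_space" using S by (simp add: fock_adjoint_def)
  show "(\<lambda>z. c * fock_kernel (\<phi> u) z) \<in> fock_space" by (rule fock_space_scale[OF fock_kernel_in_fock_space])
  fix g assume g: "g \<in> fock_space"
  have "fock_inner g (S (\<lambda>z. c * fock_kernel u z)) = fock_inner (comp_op \<phi> g) (\<lambda>z. c * fock_kernel u z)"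
    using S g K by (simp add: fock_adjoint_def)
  also have "\<dots> = fock_inner g (\<lambda>z. c * fock_kernel (\<phi> u) z)"
    using fock_inner_kernel[OF maps[OF g], of u]
    by (simp add: fock_inner_scale_right fock_inner_kernel[OF g] comp_op_def)
  finally show "fock_inner g (S (\<lambda>z. c * fock_kernel u z)) = fock_inner g (\<lambda>z. c * fock_kernel (\<phi> u) z)" .
qed

lemma hyponormal_cohyponormal_if_commuting_adjoint:
  assumes "fock_adjoint T S" and "\<And>f. S (T f) = T (S f)"
  shows "hyponormal T" and "cohyponormal T"
  using assms unfolding hyponormal_def cohyponormal_def fock_positive_def by (auto simp: fock_inner_def)

lemma comp_op_dilation:
  assumes a: "cmod a \<le> 1"
  shows "fock_bounded (comp_op (\<lambda>z. a * z))" and "normaloid (comp_op (\<lambda>z. a * z))"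
    and "hyponormal (comp_op (\<lambda>z. a * z))" and "cohyponormal (comp_op (\<lambda>z. a * z))"
proof -
  show "fock_bounded (comp_op (\<lambda>z. a * z))"
    unfolding fock_bounded_def comp_op_def
    using fock_space_comp_dilation[OF _ a] fock_norm_comp_dilation_le[OF _ a] by (auto intro!: exI[of _ 1])
  have "fock_opnorm (comp_op (\<lambda>z. a * z)) = 1"
    by (rule fock_opnorm_eq_1) (simp_all add: comp_op_def fock_norm_comp_dilation_le[OF _ a])
  then show "normaloid (comp_op (\<lambda>z. a * z))"
    using fock_spectral_radius_comp[OF comp_power_bounded_dilation[OF a]] by (simp add: normaloid_def)
  have "fock_adjoint (comp_op (\<lambda>z. a * z)) (comp_op (\<lambda>z. cnj a * z))"
    unfolding fock_adjoint_def comp_op_def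
    using fock_space_comp_dilation[of _ "cnj a"] fock_inner_comp_dilation[OF _ _ a] a by simp
  moreover have "comp_op (\<lambda>z. cnj a * z) (comp_op (\<lambda>z. a * z) f) = comp_op (\<lambda>z. a * z) (comp_op (\<lambda>z. cnj a * z) f)"
    for f by (simp add: comp_op_def mult_ac)
  ultimately show "hyponormal (comp_op (\<lambda>z. a * z))" and "cohyponormal (comp_op (\<lambda>z. a * z))"
    by (simp_all add: hyponormal_cohyponormal_if_commuting_adjoint)
qed

lemma not_fock_bounded_comp_op_translated_rotation:
  assumes a: "cmod a = 1" and b: "b \<noteq> 0"
  shows "\<not> fock_bounded (comp_op (\<lambda>z. a * z + b))"
proof
  assume "fock_bounded (comp_op (\<lambda>z. a * z + b))"
  then obtain K where K: "\<forall>f\<in>fock_space. fock_norm (comp_op (\<lambda>z. a * z + b) f) \<le> K * fock_norm f"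
    unfolding fock_bounded_def by blast
  define v where "v = complex_of_real ((\<bar>K\<bar> + 1) / (cmod b)\<^sup>2) * b"
  have "cnj v * b = \<bar>K\<bar> + 1"
    using b by (simp add: v_def complex_norm_square mult_ac del: of_real_power)
  then have "fock_norm (comp_op (\<lambda>z. a * z + b) (fock_kernel v)) = exp (\<bar>K\<bar> + 1) * fock_norm (fock_kernel v)"
    using a by (simp add: fock_norm_comp_op_kernel fock_norm_kernel)
  then have "exp (\<bar>K\<bar> + 1) * fock_norm (fock_kernel v) \<le> K * fock_norm (fock_kernel v)"
    using K fock_kernel_in_fock_space[of v] by metis
  then have "exp (\<bar>K\<bar> + 1) \<le> K"
    by (simp add: fock_norm_kernel)
  moreover have "1 + (\<bar>K\<bar> + 1) \<le> exp (\<bar>K\<bar> + 1)" by (rule exp_ge_add_one_self)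
  ultimately show False by linarith
qed

text \<open>The kernel \<open>K\<^sub>b\<close> is strictly expanded: \<open>\<parallel>C\<^sub>\<phi> K\<^sub>b\<parallel> \<ge> exp |b|\<^sup>2 > exp (|b|\<^sup>2/2) = \<parallel>K\<^sub>b\<parallel>\<close>.\<close>
lemma fock_opnorm_comp_op_affine_gt_1:
  assumes "fock_bounded (comp_op (\<lambda>z. a * z + b))" and "b \<noteq> 0"
  shows "fock_opnorm (comp_op (\<lambda>z. a * z + b)) > 1"
proof (rule fock_opnorm_gt_1[OF assms(1) fock_kernel_in_fock_space])
  have "fock_norm (fock_kernel b) = exp ((cmod b)\<^sup>2 / 2)" by (rule fock_norm_kernel)
  also have "\<dots> < exp ((cmod b)\<^sup>2)" using assms(2) by simp
  also have "\<dots> \<le> exp ((cmod b)\<^sup>2) * exp ((cmod a * cmod b)\<^sup>2 / 2)" by simp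
  also have "(cmod b)\<^sup>2 = Re (cnj b * b)" unfolding cmod_power2 by (simp add: power2_eq_square)
  finally show "fock_norm (fock_kernel b) < fock_norm (comp_op (\<lambda>z. a * z + b) (fock_kernel b))"
    by (simp only: fock_norm_comp_op_kernel)
qed

lemma not_normaloid_comp_op_affine:
  assumes "cmod a < 1" and "b \<noteq> 0" and "fock_bounded (comp_op (\<lambda>z. a * z + b))"
  shows "\<not> normaloid (comp_op (\<lambda>z. a * z + b))"
proof -
  obtain M where "comp_power_bounded (\<lambda>z. a * z + b) M"
    using comp_power_bounded_affine[OF assms(1)] .
  then show ?thesis
    using fock_opnorm_comp_op_affine_gt_1[OF assms(3,2)] fock_spectral_radius_comp by (simp add: normaloid_def)
qed

text \<open>Test positivity of \<open>C\<^sub>\<phi>\<^sup>* C\<^sub>\<phi> - C\<^sub>\<phi> C\<^sub>\<phi>\<^sup>*\<close> on the constant \<open>K\<^sub>0\<close>, which \<open>C\<^sub>\<phi>\<close> fixes.\<close>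
lemma not_hyponormal_comp_op_affine:
  assumes maps: "\<And>g. g \<in> fock_space \<Longrightarrow> comp_op (\<lambda>z. a * z + b) g \<in> fock_space" and b: "b \<noteq> 0"
  shows "\<not> hyponormal (comp_op (\<lambda>z. a * z + b))"
proof
  let ?T = "comp_op (\<lambda>z. a * z + b)"
  assume "hyponormal ?T"
  then obtain S where S: "fock_adjoint ?T S" and pos: "fock_positive (\<lambda>f z. S (?T f) z - ?T (S f) z)"
    unfolding hyponormal_def by blast
  have "S (fock_kernel 0) = fock_kernel b"
    using fock_adjoint_comp_op_kernel[OF S maps, of 1 0] by simp
  moreover have "?T (fock_kernel 0) = fock_kernel 0" by (simp add: comp_op_def fock_kernel_def)
  moreover have "(\<lambda>z. fock_kernel b z - ?T (fock_kernel b) z) \<in> fock_space"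
    by (intro fock_space_diff fock_kernel_in_fock_space maps)
  ultimately have "fock_inner (\<lambda>z. S (?T (fock_kernel 0)) z - ?T (S (fock_kernel 0)) z) (fock_kernel 0)
      = 1 - exp (cnj b * b)"
    by (simp add: fock_inner_kernel) (simp add: fock_kernel_def comp_op_def)
  also have "\<dots> = complex_of_real (1 - exp ((cmod b)\<^sup>2))"
    by (simp only: mult.commute[of "cnj b" b] complex_norm_square[symmetric] exp_of_real of_real_diff of_real_1)
  finally have "0 \<le> Re (complex_of_real (1 - exp ((cmod b)\<^sup>2)))"
    using pos fock_kernel_in_fock_space[of 0] unfolding fock_positive_def by metis
  then have "0 \<le> 1 - exp ((cmod b)\<^sup>2)" by simp
  moreover have "exp ((cmod b)\<^sup>2) > 1" using b by simp
  ultimately show False by simp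
qed

text \<open>Test positivity of \<open>C\<^sub>\<phi> C\<^sub>\<phi>\<^sup>* - C\<^sub>\<phi>\<^sup>* C\<^sub>\<phi>\<close> on \<open>K\<^sub>p\<close>, where \<open>p = b / (1 - a)\<close> is the
  fixed point of \<open>\<phi>\<close>, so that \<open>C\<^sub>\<phi>\<^sup>* K\<^sub>p = K\<^sub>p\<close>.\<close>
lemma not_cohyponormal_comp_op_affine:
  assumes maps: "\<And>g. g \<in> fock_space \<Longrightarrow> comp_op (\<lambda>z. a * z + b) g \<in> fock_space"
    and b: "b \<noteq> 0" and a: "a \<noteq> 1"
  shows "\<not> cohyponormal (comp_op (\<lambda>z. a * z + b))"
proof
  let ?\<phi> = "\<lambda>z. a * z + b"
  let ?T = "comp_op ?\<phi>"
  assume "cohyponormal ?T"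
  then obtain S where S: "fock_adjoint ?T S" and pos: "fock_positive (\<lambda>f z. ?T (S f) z - S (?T f) z)"
    unfolding cohyponormal_def by blast
  define p where "p = b / (1 - a)"
  define u where "u = cnj a * p"
  define r where "r = (cmod p)\<^sup>2"
  define s where "s = 1 + (cmod (1 - a))\<^sup>2"
  have bp: "b = p * (1 - a)" using a by (simp add: p_def)
  have r: "r > 0" using a b by (simp add: r_def p_def)
  have s: "s > 1" using a by (simp add: s_def)
  have pp: "p * cnj p = r" unfolding r_def by (rule complex_norm_square[symmetric])
  have "S (fock_kernel p) = fock_kernel p"
    using fock_adjoint_comp_op_kernel[OF S maps, of 1 p] a by (simp add: p_def field_simps)
  moreover have "S (?T (fock_kernel p)) = (\<lambda>z. exp (cnj p * b) * fock_kernel (?\<phi> u) z)"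
    unfolding comp_op_fock_kernel u_def[symmetric] by (rule fock_adjoint_comp_op_kernel[OF S maps])
  moreover have "(\<lambda>z. exp (cnj p * b) * fock_kernel u z - exp (cnj p * b) * fock_kernel (?\<phi> u) z) \<in> fock_space"
    by (intro fock_space_diff fock_space_scale fock_kernel_in_fock_space)
  ultimately have "fock_inner (\<lambda>z. ?T (S (fock_kernel p)) z - S (?T (fock_kernel p)) z) (fock_kernel p)
      = exp (cnj p * b + cnj u * p) - exp (cnj p * b + cnj (?\<phi> u) * p)"
    by (simp add: comp_op_fock_kernel u_def fock_inner_kernel) (simp add: fock_kernel_def exp_add)
  also have "cnj p * b + cnj u * p = r"
    using pp by (simp add: bp u_def algebra_simps)
  also have "cnj p * b + cnj (?\<phi> u) * p = r * s"
  proof -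
    have "cnj p * b + cnj (?\<phi> u) * p = (p * cnj p) * (1 + (1 - a) * cnj (1 - a))"
      by (simp add: bp u_def algebra_simps)
    also have "(1 - a) * cnj (1 - a) = (cmod (1 - a))\<^sup>2"
      by (rule complex_norm_square[symmetric])
    finally show ?thesis by (simp add: pp s_def)
  qed
  also have "exp (complex_of_real r) - exp (complex_of_real (r * s)) = complex_of_real (exp r - exp (r * s))"
    by (simp only: exp_of_real of_real_diff)
  finally have "0 \<le> Re (complex_of_real (exp r - exp (r * s)))"
    using pos fock_kernel_in_fock_space[of p] unfolding fock_positive_def by metis
  then have "0 \<le> exp r - exp (r * s)" by simp
  moreover have "exp r < exp (r * s)" using r s by simp
  ultimately show False by simp
qed

theorem proposition2p2:
  fixes a b :: complex
  assumes "cmod a \<le> 1"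
  shows "((fock_bounded (comp_op (\<lambda>z. a * z + b)) \<and> normaloid (comp_op (\<lambda>z. a * z + b)))
            \<longleftrightarrow> b = 0)
       \<and> ((fock_bounded (comp_op (\<lambda>z. a * z + b)) \<and> hyponormal (comp_op (\<lambda>z. a * z + b)))
            \<longleftrightarrow> b = 0)
       \<and> ((fock_bounded (comp_op (\<lambda>z. a * z + b)) \<and> cohyponormal (comp_op (\<lambda>z. a * z + b)))
            \<longleftrightarrow> b = 0)"
proof (cases "b = 0")
  case True
  then show ?thesis using comp_op_dilation[OF assms] by simp
next
  case b: False
  show ?thesis
  proof (cases "cmod a = 1")
    case True
    then show ?thesis using not_fock_bounded_comp_op_translated_rotation[OF True b] b by simp
  next
    case False
    with assms have a: "cmod a < 1" by simp
    then have "a \<noteq> 1" by auto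
    then show ?thesis
      using not_normaloid_comp_op_affine[OF a b] not_hyponormal_comp_op_affine[OF _ b]
        not_cohyponormal_comp_op_affine[OF _ b] b
      unfolding fock_bounded_def by blast
  qed
qed

end
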